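(* Let $X$ be a real Banach space and let $g:X^*\to(-\infty,+\infty]$ be a proper convex weak$^*$-lower semicontinuous function. If $x^*\in X^*$ satisfies $\inf_{X^*}g<g(x^* )$, then there exist $z^*\in\operatorname{dom} g$ and $z\in\partial g(z^* )\cap X$ such that $g(z^* )<g(x^* )$ and $\langle z,x^*-z^*\rangle>0$.
   Context: $X$ is identified with its canonical image in $X^{**}$. Proper means $g>-\infty$ everywhere and $\operatorname{dom} g=\{g<+\infty\}\ne\emptyset$. For $z^*\in\operatorname{dom} g$, $\partial g(z^* )\cap X=\{z\in X:\langle y^*-z^*,z\rangle\le g(y^* )-g(z^* )\ \forall y^*\in X^*\}$. *)

theory Defs
  imports "HOL-Analysis.Analysis"
begin

text \<open>The dual space X* of a real Banach space X is modelled as the type of bounded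
  linear functionals 'a \<Rightarrow>L real; the pairing is blinfun_apply.\<close>

definition weak_star_topology :: "('a::real_normed_vector \<Rightarrow>\<^sub>L real) topology" where
  "weak_star_topology =
     pullback_topology UNIV (\<lambda>f. blinfun_apply f) (product_topology (\<lambda>_. euclideanreal) UNIV)"

definition weak_star_lsc :: "('a::real_normed_vector \<Rightarrow>\<^sub>L real \<Rightarrow> ereal) \<Rightarrow> bool" where
  "weak_star_lsc g \<longleftrightarrow> (\<forall>c::real. closedin weak_star_topology {y. g y \<le> ereal c})"

definition proper_fun :: "('b \<Rightarrow> ereal) \<Rightarrow> bool" where
  "proper_fun g \<longleftrightarrow> (\<forall>y. g y \<noteq> -\<infinity>) \<and> (\<exists>y. g y < \<infinity>)"

definition convex_ereal :: "('b::real_vector \<Rightarrow> ereal) \<Rightarrow> bool" where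
  "convex_ereal g \<longleftrightarrow>
     (\<forall>x y. \<forall>t::real. 0 < t \<and> t < 1 \<longrightarrow>
        g (t *\<^sub>R x + (1 - t) *\<^sub>R y) \<le> ereal t * g x + ereal (1 - t) * g y)"

definition dom_fun :: "('b \<Rightarrow> ereal) \<Rightarrow> 'b set" where
  "dom_fun g = {y. g y < \<infinity>}"

text \<open>Subdifferential of g at z* intersected with X (the canonical image in X**).\<close>
definition subdiff_X :: "('a::real_normed_vector \<Rightarrow>\<^sub>L real \<Rightarrow> ereal) \<Rightarrow> ('a \<Rightarrow>\<^sub>L real) \<Rightarrow> 'a set" where
  "subdiff_X g zs = {z. \<forall>ys. ereal (blinfun_apply (ys - zs) z) \<le> g ys - g zs}"

end

theory Submission
  imports Defs
begin

text \<open>Let f be the conjugate of g restricted to X, so that f x \<le> K means that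
  y \<mapsto> \<langle>y, x\<rangle> - K is an affine minorant of g. Weak* lower semicontinuity and convexity make
  g the supremum of these minorants (Fenchel--Moreau); hence inf g < g x* yields a point x1
  with f x1 - \<langle>x*, x1\<rangle> < - g y0 for some y0. Ekeland's variational principle applied to
  f - x* + M \<parallel>\<cdot>\<parallel> on a ball, with M small, gives a point z \<noteq> 0 at which f dominates the
  concave function x \<mapsto> f z + \<langle>x*, x - z\<rangle> - M (\<parallel>x\<parallel> - \<parallel>z\<parallel>) - \<alpha> \<parallel>x - z\<parallel> near z, with \<alpha> < M.
  A Hahn--Banach sandwich between the two yields z* \<in> \<partial>f z, and comparing at 0 gives
  \<langle>z*, z\<rangle> \<le> \<langle>x*, z\<rangle> - (M - \<alpha>) \<parallel>z\<parallel> < \<langle>x*, z\<rangle>. By biconjugation z* \<in> \<partial>f z means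
  z \<in> \<partial>g z* with g z* = \<langle>z*, z\<rangle> - f z < \<langle>x*, z\<rangle> - f z \<le> g x*.\<close>

section \<open>Hahn--Banach for sublinear functionals\<close>

text \<open>Partial linear functionals below p are represented by their graphs, so that Zorn's
  lemma applies to inclusion.\<close>

definition dominated_linear_graph :: "('v::real_vector \<Rightarrow> real) \<Rightarrow> ('v \<times> real) set \<Rightarrow> bool" where
  "dominated_linear_graph p G \<longleftrightarrow>
     (\<forall>x a y b. (x, a) \<in> G \<longrightarrow> (y, b) \<in> G \<longrightarrow> (x + y, a + b) \<in> G) \<and>
     (\<forall>x a t. (x, a) \<in> G \<longrightarrow> (t *\<^sub>R x, t * a) \<in> G) \<and>
     (\<forall>x a b. (x, a) \<in> G \<longrightarrow> (x, b) \<in> G \<longrightarrow> a = b) \<and>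
     (\<forall>x a. (x, a) \<in> G \<longrightarrow> a \<le> p x)"

lemma dominated_linear_graphD:
  assumes "dominated_linear_graph p G"
  shows "\<And>x a y b. (x, a) \<in> G \<Longrightarrow> (y, b) \<in> G \<Longrightarrow> (x + y, a + b) \<in> G"
    and "\<And>x a t. (x, a) \<in> G \<Longrightarrow> (t *\<^sub>R x, t * a) \<in> G"
    and "\<And>x a b. (x, a) \<in> G \<Longrightarrow> (x, b) \<in> G \<Longrightarrow> a = b"
    and "\<And>x a. (x, a) \<in> G \<Longrightarrow> a \<le> p x"
  using assms unfolding dominated_linear_graph_def by blast+

lemma dominated_linear_graph_line:
  fixes p :: "'v::real_vector \<Rightarrow> real"
  assumes hom: "\<And>t x. t \<ge> 0 \<Longrightarrow> p (t *\<^sub>R x) = t * p x"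
    and "a \<le> p v" and "- a \<le> p (- v)"
  shows "dominated_linear_graph p {(t *\<^sub>R v, t * a) | t. True}"
proof (cases "v = 0")
  case True
  have "p 0 = 0" using hom[of 0 0] by simp
  then have "a = 0" using assms True by simp
  then show ?thesis using True \<open>p 0 = 0\<close> unfolding dominated_linear_graph_def by auto
next
  case False
  have dom: "t * a \<le> p (t *\<^sub>R v)" for t
  proof (cases "t \<ge> 0")
    case True
    then show ?thesis using hom[OF True, of v] assms(2) by (simp add: mult_left_mono)
  next
    case False
    then have "p (t *\<^sub>R v) = (- t) * p (- v)" using hom[of "- t" "- v"] by simp
    then show ?thesis using mult_left_mono[OF assms(3), of "- t"] False by simp
  qed
  show ?thesis
    unfolding dominated_linear_graph_def
  proof (intro conjI allI impI)
    fix x b y b' assume "(x, b) \<in> {(t *\<^sub>R v, t * a) |t. True}" "(y, b') \<in> {(t *\<^sub>R v, t * a) |t. True}"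
    then obtain t1 t2 where "(x, b) = (t1 *\<^sub>R v, t1 * a)" "(y, b') = (t2 *\<^sub>R v, t2 * a)" by blast
    then show "(x + y, b + b') \<in> {(t *\<^sub>R v, t * a) |t. True}"
      by (intro CollectI exI[of _ "t1 + t2"]) (auto simp: algebra_simps)
  next
    fix x b t assume "(x, b) \<in> {(t *\<^sub>R v, t * a) |t. True}"
    then obtain t1 where "(x, b) = (t1 *\<^sub>R v, t1 * a)" by blast
    then show "(t *\<^sub>R x, t * b) \<in> {(t *\<^sub>R v, t * a) |t. True}"
      by (intro CollectI exI[of _ "t * t1"]) auto
  next
    fix x b b' assume "(x, b) \<in> {(t *\<^sub>R v, t * a) |t. True}" "(x, b') \<in> {(t *\<^sub>R v, t * a) |t. True}"
    then obtain t1 t2 where "(x, b) = (t1 *\<^sub>R v, t1 * a)" "(x, b') = (t2 *\<^sub>R v, t2 * a)" by blast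
    then show "b = b'" using False by (metis prod.inject scaleR_cancel_right)
  next
    fix x b assume "(x, b) \<in> {(t *\<^sub>R v, t * a) |t. True}"
    then show "b \<le> p x" using dom by auto
  qed
qed

lemma dominated_linear_graph_Union_chain:
  assumes "C \<in> chains {G. dominated_linear_graph p G}"
  shows "dominated_linear_graph p (\<Union>C)"
proof -
  have dom: "\<And>G. G \<in> C \<Longrightarrow> dominated_linear_graph p G"
    and common: "\<And>P Q. P \<in> \<Union>C \<Longrightarrow> Q \<in> \<Union>C \<Longrightarrow> \<exists>G\<in>C. P \<in> G \<and> Q \<in> G"
    using assms unfolding chains_def chain_subset_def by blast+
  show ?thesis
    unfolding dominated_linear_graph_def
  proof (intro conjI allI impI)
    fix x a y b assume "(x, a) \<in> \<Union>C" "(y, b) \<in> \<Union>C"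
    with common obtain G where "G \<in> C" "(x, a) \<in> G" "(y, b) \<in> G" by blast
    then show "(x + y, a + b) \<in> \<Union>C" using dom dominated_linear_graphD(1) by blast
  next
    fix x a t assume "(x, a) \<in> \<Union>C"
    then show "(t *\<^sub>R x, t * a) \<in> \<Union>C" using dom dominated_linear_graphD(2) by blast
  next
    fix x a b assume "(x, a) \<in> \<Union>C" "(x, b) \<in> \<Union>C"
    with common obtain G where "G \<in> C" "(x, a) \<in> G" "(x, b) \<in> G" by blast
    then show "a = b" using dom dominated_linear_graphD(3) by blast
  next
    fix x a assume "(x, a) \<in> \<Union>C"
    then show "a \<le> p x" using dom dominated_linear_graphD(4) by blast
  qed
qed

text \<open>The value c of an extension at a new direction v has to lie between these two
  bounds, which are compatible by subadditivity of p.\<close>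

lemma dominated_linear_graph_extension_value:
  assumes sub: "\<And>x y. p (x + y) \<le> p x + p y"
    and G: "dominated_linear_graph p G" "(0, 0) \<in> G"
  obtains c where "\<And>s b. (s, b) \<in> G \<Longrightarrow> b - p (s - v) \<le> c"
    and "\<And>s b. (s, b) \<in> G \<Longrightarrow> c \<le> p (s + v) - b"
proof -
  define L where "L = {b - p (s - v) | s b. (s, b) \<in> G}"
  have upper: "l \<le> p (s' + v) - b'" if "l \<in> L" "(s', b') \<in> G" for l s' b'
  proof -
    obtain s b where l: "l = b - p (s - v)" "(s, b) \<in> G" using \<open>l \<in> L\<close> unfolding L_def by auto
    have "b + b' \<le> p (s + s')"
      using dominated_linear_graphD(1,4)[OF G(1)] l(2) that(2) by blast
    also have "\<dots> \<le> p (s - v) + p (s' + v)" using sub[of "s - v" "s' + v"] by simp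
    finally show ?thesis using l by simp
  qed
  have "L \<noteq> {}" using G(2) unfolding L_def by auto
  moreover have "bdd_above L" using upper G(2) unfolding bdd_above_def by blast
  ultimately show thesis
    by (intro that[of "Sup L"] cSup_upper cSup_least) (auto simp: L_def upper)
qed

lemma dominated_linear_graph_extension_dominated:
  assumes hom: "\<And>t x. t \<ge> 0 \<Longrightarrow> p (t *\<^sub>R x) = t * p x"
    and G: "dominated_linear_graph p G"
    and c1: "\<And>s b. (s, b) \<in> G \<Longrightarrow> b - p (s - v) \<le> c"
    and c2: "\<And>s b. (s, b) \<in> G \<Longrightarrow> c \<le> p (s + v) - b"
    and sb: "(s, b) \<in> G"
  shows "b + t * c \<le> p (s + t *\<^sub>R v)"
proof (cases t "0::real" rule: linorder_cases)
  case less
  have "(1 / (- t)) * b - p ((1 / (- t)) *\<^sub>R s - v) \<le> c" using c1 dominated_linear_graphD(2)[OF G sb] by blast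
  then have "(- t) * ((1 / (- t)) * b - p ((1 / (- t)) *\<^sub>R s - v)) \<le> (- t) * c"
    using less by (intro mult_left_mono) auto
  also have "(- t) * ((1 / (- t)) * b - p ((1 / (- t)) *\<^sub>R s - v)) = b - p (s + t *\<^sub>R v)"
    using hom[of "- t" "(1 / (- t)) *\<^sub>R s - v"] less by (simp add: algebra_simps)
  finally show ?thesis by simp
next
  case equal
  then show ?thesis using dominated_linear_graphD(4)[OF G sb] by simp
next
  case greater
  have "c \<le> p ((1 / t) *\<^sub>R s + v) - (1 / t) * b" using c2 dominated_linear_graphD(2)[OF G sb] by blast
  then have "t * c \<le> t * (p ((1 / t) *\<^sub>R s + v) - (1 / t) * b)"
    using greater by (intro mult_left_mono) auto
  also have "t * (p ((1 / t) *\<^sub>R s + v) - (1 / t) * b) = p (s + t *\<^sub>R v) - b"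
    using hom[of t "(1 / t) *\<^sub>R s + v"] greater by (simp add: algebra_simps)
  finally show ?thesis by simp
qed

lemma dominated_linear_graph_extend:
  fixes p :: "'v::real_vector \<Rightarrow> real"
  assumes sub: "\<And>x y. p (x + y) \<le> p x + p y"
    and hom: "\<And>t x. t \<ge> 0 \<Longrightarrow> p (t *\<^sub>R x) = t * p x"
    and G: "dominated_linear_graph p G" "(0, 0) \<in> G"
    and v: "\<nexists>b. (v, b) \<in> G"
  shows "\<exists>G' c. dominated_linear_graph p G' \<and> G \<subseteq> G' \<and> (v, c) \<in> G'"
proof -
  note Gadd = dominated_linear_graphD(1)[OF G(1)] and Gscale = dominated_linear_graphD(2)[OF G(1)]
  obtain c where c1: "\<And>s b. (s, b) \<in> G \<Longrightarrow> b - p (s - v) \<le> c"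
    and c2: "\<And>s b. (s, b) \<in> G \<Longrightarrow> c \<le> p (s + v) - b"
    using dominated_linear_graph_extension_value[OF sub G] by blast
  define G' where "G' = {(s + t *\<^sub>R v, b + t * c) | s b t. (s, b) \<in> G}"
  have unique_coeff: "t = t'" if "(s, b) \<in> G" "(s', b') \<in> G" "s + t *\<^sub>R v = s' + t' *\<^sub>R v"
    for s b s' b' t t'
  proof (rule ccontr)
    assume "t \<noteq> t'"
    have "(s + (- 1) *\<^sub>R s', b + (- 1) * b') \<in> G" using Gadd[OF that(1) Gscale[OF that(2)]] .
    then have "((1 / (t' - t)) *\<^sub>R (s - s'), (1 / (t' - t)) * (b - b')) \<in> G"
      using Gscale by fastforce
    moreover have "s - s' = (t' - t) *\<^sub>R v" using that(3) by (simp add: algebra_simps)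
    ultimately show False using v \<open>t \<noteq> t'\<close> by auto
  qed
  have dominated: "b + t * c \<le> p (s + t *\<^sub>R v)" if "(s, b) \<in> G" for s b t
    using dominated_linear_graph_extension_dominated[OF hom G(1) c1 c2 that] .
  have G': "dominated_linear_graph p G'"
    unfolding dominated_linear_graph_def
  proof (intro conjI allI impI)
    fix x a y b assume "(x, a) \<in> G'" "(y, b) \<in> G'"
    then obtain s1 b1 t1 s2 b2 t2 where "x = s1 + t1 *\<^sub>R v" "a = b1 + t1 * c" "(s1, b1) \<in> G"
      "y = s2 + t2 *\<^sub>R v" "b = b2 + t2 * c" "(s2, b2) \<in> G" unfolding G'_def by auto
    then show "(x + y, a + b) \<in> G'" unfolding G'_def
      by (intro CollectI exI[of _ "s1 + s2"] exI[of _ "b1 + b2"] exI[of _ "t1 + t2"])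
        (auto simp: Gadd algebra_simps)
  next
    fix x a t assume "(x, a) \<in> G'"
    then obtain s1 b1 t1 where "x = s1 + t1 *\<^sub>R v" "a = b1 + t1 * c" "(s1, b1) \<in> G"
      unfolding G'_def by auto
    then have "(t *\<^sub>R x, t * a) = (t *\<^sub>R s1 + (t * t1) *\<^sub>R v, t * b1 + (t * t1) * c)"
      by (auto simp: algebra_simps)
    moreover have "(t *\<^sub>R s1, t * b1) \<in> G" using Gscale \<open>(s1, b1) \<in> G\<close> by blast
    ultimately show "(t *\<^sub>R x, t * a) \<in> G'" unfolding G'_def by blast
  next
    fix x a b assume "(x, a) \<in> G'" "(x, b) \<in> G'"
    then obtain s1 b1 t1 s2 b2 t2 where h: "(x, a) = (s1 + t1 *\<^sub>R v, b1 + t1 * c)" "(s1, b1) \<in> G"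
      "(x, b) = (s2 + t2 *\<^sub>R v, b2 + t2 * c)" "(s2, b2) \<in> G" unfolding G'_def by blast
    then have "t1 = t2" using unique_coeff[of s1 b1 s2 b2 t1 t2] by auto
    then show "a = b" using h dominated_linear_graphD(3)[OF G(1)] by auto
  next
    fix x a assume "(x, a) \<in> G'"
    then show "a \<le> p x" unfolding G'_def using dominated by auto
  qed
  moreover have "G \<subseteq> G'" unfolding G'_def by (force intro: exI[of _ 0])
  moreover have "(v, c) \<in> G'"
  proof -
    have "(v, c) = (0 + 1 *\<^sub>R v, 0 + 1 * c)" by simp
    then show ?thesis unfolding G'_def using G(2) by blast
  qed
  ultimately show ?thesis by (intro exI[of _ G'] exI[of _ c] conjI)
qed

theorem hahn_banach_sublinear:
  fixes p :: "'v::real_vector \<Rightarrow> real"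
  assumes sub: "\<And>x y. p (x + y) \<le> p x + p y"
    and hom: "\<And>t x. t \<ge> 0 \<Longrightarrow> p (t *\<^sub>R x) = t * p x"
    and "a \<le> p v" and "- a \<le> p (- v)"
  shows "\<exists>L. linear L \<and> (\<forall>x. L x \<le> p x) \<and> L v = a"
proof -
  define G0 where "G0 = {(t *\<^sub>R v, t * a) | t. True}"
  define A where "A = {G. G0 \<subseteq> G \<and> dominated_linear_graph p G}"
  have "\<forall>C\<in>chains A. \<exists>U\<in>A. \<forall>X\<in>C. X \<subseteq> U"
  proof
    fix C assume C: "C \<in> chains A"
    show "\<exists>U\<in>A. \<forall>X\<in>C. X \<subseteq> U"
    proof (cases "C = {}")
      case True
      then show ?thesis using dominated_linear_graph_line[OF hom assms(3,4)] unfolding A_def G0_def by auto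
    next
      case False
      have "C \<subseteq> A" "chain\<^sub>\<subseteq> C" using C unfolding chains_def by auto
      then have "dominated_linear_graph p (\<Union>C)"
        by (intro dominated_linear_graph_Union_chain) (auto simp: chains_def A_def)
      moreover have "G0 \<subseteq> \<Union>C" using False \<open>C \<subseteq> A\<close> unfolding A_def by auto
      ultimately show ?thesis unfolding A_def by blast
    qed
  qed
  from Zorn_Lemma2[OF this]
  obtain M where "M \<in> A" and maximal: "\<And>X. X \<in> A \<Longrightarrow> M \<subseteq> X \<Longrightarrow> X = M"
    by blast
  then have M: "dominated_linear_graph p M" and "G0 \<subseteq> M" unfolding A_def by auto
  have "(0 *\<^sub>R v, 0 * a) \<in> M" and va: "(1 *\<^sub>R v, 1 * a) \<in> M"
    using \<open>G0 \<subseteq> M\<close> unfolding G0_def by blast+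
  then have M0: "(0, 0) \<in> M" by simp
  have total: "\<exists>b. (x, b) \<in> M" for x
  proof (rule ccontr)
    assume "\<nexists>b. (x, b) \<in> M"
    from dominated_linear_graph_extend[OF sub hom M M0 this]
    obtain G' c where "dominated_linear_graph p G'" "M \<subseteq> G'" "(x, c) \<in> G'" by blast
    moreover from this have "G' = M" using maximal \<open>G0 \<subseteq> M\<close> unfolding A_def by blast
    ultimately show False using \<open>\<nexists>b. (x, b) \<in> M\<close> by blast
  qed
  define L where "L x = (THE b. (x, b) \<in> M)" for x
  have graph: "(x, L x) \<in> M" for x
    unfolding L_def using total dominated_linear_graphD(3)[OF M] by (metis theI)
  have graph_eq: "L x = b" if "(x, b) \<in> M" for x b
    using that graph dominated_linear_graphD(3)[OF M] by blast
  have "linear L"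
  proof (rule linearI)
    show "L (x + y) = L x + L y" for x y
      using graph_eq[OF dominated_linear_graphD(1)[OF M graph graph]] .
    show "L (t *\<^sub>R x) = t *\<^sub>R L x" for t x
      using graph_eq[OF dominated_linear_graphD(2)[OF M graph]] by simp
  qed
  moreover have "L x \<le> p x" for x using graph dominated_linear_graphD(4)[OF M] by blast
  moreover have "L v = a" using graph_eq va by simp
  ultimately show ?thesis by blast
qed

section \<open>Separation of convex sets\<close>

definition minkowski_functional :: "'v::real_vector set \<Rightarrow> 'v \<Rightarrow> real" where
  "minkowski_functional H v = Inf {t. 0 < t \<and> (1 / t) *\<^sub>R v \<in> H}"

locale convex_seminorm_neighbourhood =
  fixes q :: "'v::real_vector \<Rightarrow> real" and H :: "'v set" and \<delta> :: real
  assumes q_add: "\<And>x y. q (x + y) \<le> q x + q y"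
    and q_scale: "\<And>t x. q (t *\<^sub>R x) = \<bar>t\<bar> * q x"
    and convex: "convex H"
    and \<delta>_pos: "\<delta> > 0"
    and ball_subset: "\<And>v. q v < \<delta> \<Longrightarrow> v \<in> H"
begin

abbreviation \<mu> where "\<mu> \<equiv> minkowski_functional H"

lemma q_nonneg: "q x \<ge> 0"
proof -
  have "q 0 \<le> q x + q (- x)" using q_add[of x "- x"] by simp
  then show ?thesis using q_scale[of 0 0] q_scale[of "- 1" x] by simp
qed

lemma zero_mem: "0 \<in> H"
  using ball_subset[of 0] q_scale[of 0 0] \<delta>_pos by simp

lemma inverse_scaled_mem_mono:
  assumes "0 < t" "(1 / t) *\<^sub>R v \<in> H" "t \<le> t'"
  shows "(1 / t') *\<^sub>R v \<in> H"
proof -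
  have "(t / t') *\<^sub>R ((1 / t) *\<^sub>R v) + (1 - t / t') *\<^sub>R 0 \<in> H"
    using assms zero_mem by (intro convex[unfolded convex_def, rule_format]) auto
  then show ?thesis using assms by simp
qed

lemma inverse_scaled_mem_of_q_less:
  assumes "t > q v / \<delta>"
  shows "0 < t \<and> (1 / t) *\<^sub>R v \<in> H"
proof -
  have t: "t > 0" using assms q_nonneg[of v] \<delta>_pos by (smt (verit) divide_nonneg_pos)
  have "q ((1 / t) *\<^sub>R v) = q v / t" using q_scale t by simp
  also have "\<dots> < \<delta>" using assms t \<delta>_pos by (simp add: divide_less_eq mult.commute pos_divide_less_eq)
  finally show ?thesis using ball_subset t by auto
qed

lemma minkowski_functional_le:
  assumes "0 < t" "(1 / t) *\<^sub>R v \<in> H"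
  shows "\<mu> v \<le> t"
  unfolding minkowski_functional_def using assms by (intro cInf_lower) (auto intro: bdd_belowI[of _ 0])

lemma minkowski_functional_approx:
  assumes "e > 0"
  obtains t where "0 < t" "(1 / t) *\<^sub>R v \<in> H" "t < \<mu> v + e"
proof -
  have "{t. 0 < t \<and> (1 / t) *\<^sub>R v \<in> H} \<noteq> {}" using inverse_scaled_mem_of_q_less[where t = "q v / \<delta> + 1" and v = v] by auto
  then have "\<exists>t\<in>{t. 0 < t \<and> (1 / t) *\<^sub>R v \<in> H}. t < \<mu> v + e"
    unfolding minkowski_functional_def using assms by (intro cInf_lessD) auto
  then show thesis using that by blast
qed

lemma minkowski_functional_nonneg: "\<mu> v \<ge> 0"
proof (rule field_le_epsilon)
  fix e :: real assume "e > 0"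
  then obtain t where "0 < t" "t < \<mu> v + e" using minkowski_functional_approx by metis
  then show "0 \<le> \<mu> v + e" by simp
qed

lemma minkowski_functional_le_q: "\<mu> v \<le> q v / \<delta>"
proof (rule field_le_epsilon)
  fix e :: real assume "e > 0"
  then have "0 < q v / \<delta> + e \<and> (1 / (q v / \<delta> + e)) *\<^sub>R v \<in> H" by (intro inverse_scaled_mem_of_q_less) simp
  then show "\<mu> v \<le> q v / \<delta> + e" using minkowski_functional_le by blast
qed

lemma minkowski_functional_add: "\<mu> (x + y) \<le> \<mu> x + \<mu> y"
proof (rule field_le_epsilon)
  fix e :: real assume e: "e > 0"
  obtain s where s: "0 < s" "(1 / s) *\<^sub>R x \<in> H" "s < \<mu> x + e / 2"
    using minkowski_functional_approx[of "e / 2"] e by auto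
  obtain t where t: "0 < t" "(1 / t) *\<^sub>R y \<in> H" "t < \<mu> y + e / 2"
    using minkowski_functional_approx[of "e / 2"] e by auto
  have "(1 / (s + t)) *\<^sub>R (x + y) = (s / (s + t)) *\<^sub>R ((1 / s) *\<^sub>R x) + (t / (s + t)) *\<^sub>R ((1 / t) *\<^sub>R y)"
    using s t by (simp add: algebra_simps)
  also have "\<dots> \<in> H" using s t
    by (intro convex[unfolded convex_def, rule_format]) (auto simp: add_divide_distrib[symmetric])
  finally have "\<mu> (x + y) \<le> s + t" using s t by (intro minkowski_functional_le) auto
  then show "\<mu> (x + y) \<le> \<mu> x + \<mu> y + e" using s t by simp
qed

lemma minkowski_functional_scale_le:
  assumes "t > 0"
  shows "\<mu> (t *\<^sub>R x) \<le> t * \<mu> x"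
proof (rule field_le_epsilon)
  fix e :: real assume e: "e > 0"
  obtain s where s: "0 < s" "(1 / s) *\<^sub>R x \<in> H" "s < \<mu> x + e / t"
    using minkowski_functional_approx[of "e / t"] e assms by auto
  have "(1 / (t * s)) *\<^sub>R (t *\<^sub>R x) = (1 / s) *\<^sub>R x" using assms by simp
  then have "\<mu> (t *\<^sub>R x) \<le> t * s" using s assms by (intro minkowski_functional_le) auto
  also have "\<dots> \<le> t * (\<mu> x + e / t)" using s assms by simp
  finally show "\<mu> (t *\<^sub>R x) \<le> t * \<mu> x + e" using assms by (simp add: algebra_simps)
qed

lemma minkowski_functional_scale:
  assumes "t \<ge> 0"
  shows "\<mu> (t *\<^sub>R x) = t * \<mu> x"
proof (cases "t = 0")
  case True
  then show ?thesis
    using minkowski_functional_le_q[of 0] minkowski_functional_nonneg[of 0] q_scale[of 0 0] by simp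
next
  case False
  then have t: "t > 0" using assms by simp
  have "\<mu> x = \<mu> ((1 / t) *\<^sub>R (t *\<^sub>R x))" using t by simp
  also have "\<dots> \<le> (1 / t) * \<mu> (t *\<^sub>R x)" using minkowski_functional_scale_le[of "1 / t" "t *\<^sub>R x"] t by simp
  finally have "t * \<mu> x \<le> \<mu> (t *\<^sub>R x)" using t by (simp add: field_simps)
  then show ?thesis using minkowski_functional_scale_le[OF t, of x] by linarith
qed

lemma minkowski_functional_le_one: "v \<in> H \<Longrightarrow> \<mu> v \<le> 1"
  using minkowski_functional_le[of 1 v] by simp

lemma minkowski_functional_ge_one:
  assumes "d \<notin> H"
  shows "1 \<le> \<mu> d"
proof (rule ccontr)
  assume "\<not> 1 \<le> \<mu> d"
  then have "1 - \<mu> d > 0" by simp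
  then obtain t where "0 < t" "(1 / t) *\<^sub>R d \<in> H" "t < \<mu> d + (1 - \<mu> d)"
    by (rule minkowski_functional_approx)
  then have "(1 / 1) *\<^sub>R d \<in> H" using inverse_scaled_mem_mono[of t d 1] by simp
  then show False using assms by simp
qed

end

text \<open>The separating functional is a Hahn--Banach extension below the Minkowski functional
  of C - U + (u0 - c0).\<close>

lemma separating_linear_functional:
  fixes q :: "'v::real_vector \<Rightarrow> real"
  assumes q_add: "\<And>x y. q (x + y) \<le> q x + q y" and q_scale: "\<And>t x. q (t *\<^sub>R x) = \<bar>t\<bar> * q x"
    and C: "convex C" "c0 \<in> C" and U: "convex U" "u0 \<in> U" and \<delta>: "\<delta> > 0"
    and ball: "\<And>v. q v < \<delta> \<Longrightarrow> u0 + v \<in> U" and disjoint: "C \<inter> U = {}"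
  shows "\<exists>L \<tau>. linear L \<and> (\<forall>v. \<bar>L v\<bar> \<le> q v / \<delta>) \<and> \<tau> > 0 \<and> (\<forall>c\<in>C. \<forall>u\<in>U. L c \<le> L u)
             \<and> (\<forall>c\<in>C. L c + \<tau> \<le> L u0)"
proof -
  define d where "d = u0 - c0"
  define H where "H = {c - u + d | c u. c \<in> C \<and> u \<in> U}"
  have q_neg: "q (- x) = q x" for x using q_scale[of "- 1" x] by simp
  have "convex H"
  proof -
    have "H = (+) d ` (\<Union>c\<in>C. \<Union>u\<in>U. {c - u})"
      unfolding H_def by (force simp: add.commute)
    then show ?thesis using convex_differences[OF C(1) U(1)] by simp
  qed
  moreover have "v \<in> H" if "q v < \<delta>" for v
  proof -
    have "u0 + (- v) \<in> U" using ball[of "- v"] that q_neg by simp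
    moreover have "v = c0 - (u0 + (- v)) + d" unfolding d_def by simp
    ultimately show ?thesis unfolding H_def using C(2) by blast
  qed
  ultimately interpret convex_seminorm_neighbourhood q H \<delta>
    using q_add q_scale \<delta> by unfold_locales auto
  have "d \<notin> H" using disjoint unfolding H_def by auto
  then obtain L where L: "linear L" "\<And>x. L x \<le> \<mu> x" "L d = 1"
    using hahn_banach_sublinear[of \<mu> 1 d] minkowski_functional_add minkowski_functional_scale
      minkowski_functional_ge_one minkowski_functional_nonneg[of "- d"] by force
  have bound: "\<bar>L v\<bar> \<le> q v / \<delta>" for v
    using L(2)[of v] L(2)[of "- v"] minkowski_functional_le_q[of v] minkowski_functional_le_q[of "- v"]
      q_neg linear_neg[OF L(1)] by (simp add: abs_le_iff)
  have separates: "L c \<le> L u" if "c \<in> C" "u \<in> U" for c u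
  proof -
    have "c - u + d \<in> H" using that unfolding H_def by blast
    then have "L (c - u + d) \<le> 1" using L(2) minkowski_functional_le_one order_trans by blast
    then show ?thesis using L(1) L(3) by (simp add: linear_add linear_diff)
  qed
  define \<tau> where "\<tau> = \<delta> / (2 * (q d + 1))"
  have \<tau>: "\<tau> > 0" unfolding \<tau>_def using \<delta> q_nonneg[of d] by (simp add: add_nonneg_pos)
  have "q (- (\<tau> *\<^sub>R d)) < \<delta>"
  proof -
    have "q (- (\<tau> *\<^sub>R d)) = \<tau> * q d" using q_scale[of "- \<tau>" d] \<tau> by simp
    also have "\<dots> \<le> \<tau> * (q d + 1)" using \<tau> by simp
    also have "\<dots> = \<delta> / 2" unfolding \<tau>_def using q_nonneg[of d] by (simp add: field_simps)
    finally show ?thesis using \<delta> by simp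
  qed
  then have "u0 - \<tau> *\<^sub>R d \<in> U" using ball by fastforce
  moreover have "L (u0 - \<tau> *\<^sub>R d) = L u0 - \<tau>" using L(1) L(3) by (simp add: linear_diff linear_scale)
  ultimately have "L c + \<tau> \<le> L u0" if "c \<in> C" for c using separates[OF that] by fastforce
  then show ?thesis using bound \<tau> separates L(1) by blast
qed

section \<open>The weak* topology\<close>

declare blinfun.add_left[simp] blinfun.diff_left[simp] blinfun.scaleR_left[simp]
  blinfun.minus_left[simp] blinfun.zero_left[simp] blinfun.add_right[simp] blinfun.diff_right[simp]
  blinfun.scaleR_right[simp] blinfun.minus_right[simp] blinfun.zero_right[simp]

lemma topspace_weak_star_topology: "topspace weak_star_topology = UNIV"
  unfolding weak_star_topology_def by (simp add: topspace_pullback_topology)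

lemma weak_star_closed_avoids_basic_neighbourhood:
  assumes "closedin weak_star_topology S" "y1 \<notin> S"
  obtains F \<delta> where "finite F" "\<delta> > 0"
    "\<And>y. (\<forall>x\<in>F. \<bar>blinfun_apply y x - blinfun_apply y1 x\<bar> < \<delta>) \<Longrightarrow> y \<notin> S"
proof -
  have "openin weak_star_topology (UNIV - S)"
    using assms(1) unfolding closedin_def topspace_weak_star_topology by simp
  then obtain U where U: "openin (product_topology (\<lambda>_. euclideanreal) UNIV) U"
    "UNIV - S = blinfun_apply -` U \<inter> UNIV"
    unfolding weak_star_topology_def openin_pullback_topology by blast
  have "blinfun_apply y1 \<in> U" using U(2) assms(2) by blast
  from product_topology_open_contains_basis[OF U(1) this] obtain X where
    X: "blinfun_apply y1 \<in> (\<Pi>\<^sub>E i\<in>UNIV. X i)" "\<And>i. open (X i)" "finite {i. X i \<noteq> UNIV}"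
       "(\<Pi>\<^sub>E i\<in>UNIV. X i) \<subseteq> U" by auto
  define F where "F = {i. X i \<noteq> UNIV}"
  have "\<forall>i\<in>F. \<exists>d>0. ball (blinfun_apply y1 i) d \<subseteq> X i"
    using X(1,2) open_contains_ball by blast
  then obtain d where d: "\<And>i. i \<in> F \<Longrightarrow> d i > 0 \<and> ball (blinfun_apply y1 i) (d i) \<subseteq> X i" by metis
  define \<delta> where "\<delta> = Min (insert 1 (d ` F))"
  have "finite F" using X(3) F_def by simp
  then have "\<delta> > 0" and \<delta>_le: "\<And>i. i \<in> F \<Longrightarrow> \<delta> \<le> d i" unfolding \<delta>_def using d by auto
  have "y \<notin> S" if "\<forall>x\<in>F. \<bar>blinfun_apply y x - blinfun_apply y1 x\<bar> < \<delta>" for y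
  proof -
    have "blinfun_apply y i \<in> X i" for i
    proof (cases "i \<in> F")
      case True
      then have "dist (blinfun_apply y1 i) (blinfun_apply y i) < d i"
        using that[rule_format, OF True] \<delta>_le[OF True] by (simp add: dist_real_def abs_minus_commute)
      then show ?thesis using d[OF True] by auto
    next
      case False
      then show ?thesis unfolding F_def by auto
    qed
    then have "blinfun_apply y \<in> U" using X(4) by auto
    then show ?thesis using U(2) by blast
  qed
  then show thesis using that \<open>finite F\<close> \<open>\<delta> > 0\<close> by blast
qed

lemma linear_functional_eq_evaluation:
  fixes L :: "('a::real_normed_vector \<Rightarrow>\<^sub>L real) \<Rightarrow> real"
  assumes "finite F" "linear L" "\<And>y. (\<forall>x\<in>F. blinfun_apply y x = 0) \<Longrightarrow> L y = 0"
  shows "\<exists>z. \<forall>y. L y = blinfun_apply y z"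
  using assms
proof (induction F arbitrary: L rule: finite_induct)
  case empty
  then show ?case by (intro exI[of _ 0]) auto
next
  case (insert x0 F L)
  show ?case
  proof (cases "\<forall>y::'a \<Rightarrow>\<^sub>L real. (\<forall>x\<in>F. blinfun_apply y x = 0) \<longrightarrow> blinfun_apply y x0 = 0")
    case True
    then show ?thesis using insert.IH[OF insert.prems(1)] insert.prems(2) by simp
  next
    case False
    then obtain y0 :: "'a \<Rightarrow>\<^sub>L real" where y0: "\<forall>x\<in>F. blinfun_apply y0 x = 0" "blinfun_apply y0 x0 \<noteq> 0"
      by blast
    define y1 where "y1 = (1 / blinfun_apply y0 x0) *\<^sub>R y0"
    have y1: "\<forall>x\<in>F. blinfun_apply y1 x = 0" "blinfun_apply y1 x0 = 1"
      using y0 unfolding y1_def by auto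
    txt \<open>Subtracting the multiple of evaluation at x0 reduces to the kernel of F.\<close>
    define L' where "L' y = L y - L y1 * blinfun_apply y x0" for y
    have "linear L'" unfolding L'_def
      using insert.prems(1) by (intro linearI) (auto simp: linear_add linear_scale algebra_simps)
    moreover have "L' y = 0" if "\<forall>x\<in>F. blinfun_apply y x = 0" for y
    proof -
      have "L (y - blinfun_apply y x0 *\<^sub>R y1) = 0" using that y1 insert.prems(2) by simp
      then show ?thesis unfolding L'_def using insert.prems(1) by (simp add: linear_diff linear_scale)
    qed
    ultimately obtain z' where z': "\<And>y. L' y = blinfun_apply y z'" using insert.IH by blast
    have "L y = blinfun_apply y (z' + L y1 *\<^sub>R x0)" for y
      using z'[of y] unfolding L'_def by (simp add: diff_eq_eq)
    then show ?thesis by blast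
  qed
qed

lemma linear_Pair_split:
  fixes L :: "'a::real_vector \<times> real \<Rightarrow> real"
  assumes "linear L"
  shows "L (x, r) = L (x, 0) + r * L (0, 1)"
proof -
  have "L (x, r) = L ((x, 0) + r *\<^sub>R (0, 1))" by simp
  then show ?thesis by (simp only: linear_add[OF assms] linear_scale[OF assms] real_scaleR_def)
qed

lemma linear_bounded_by_evaluations:
  fixes L :: "('a::real_normed_vector \<Rightarrow>\<^sub>L real) \<times> real \<Rightarrow> real"
  assumes "finite F" "linear L"
    and bound: "\<And>y r. \<bar>L (y, r)\<bar> \<le> ((\<Sum>x\<in>F. \<bar>blinfun_apply y x\<bar>) + \<bar>r\<bar>) / \<delta>"
  obtains z s where "\<And>y r. L (y, r) = blinfun_apply y z + r * s"
proof -
  have split: "L (y, r) = L (y, 0) + r * L (0, 1)" for y r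
  proof -
    have "L (y, r) = L ((y, 0) + r *\<^sub>R (0, 1))" by simp
    then show ?thesis by (simp only: linear_add[OF assms(2)] linear_scale[OF assms(2)] real_scaleR_def)
  qed
  have "linear (\<lambda>y. L (y, 0))"
    using linear_add[OF assms(2), of "(_, 0)" "(_, 0)"] linear_scale[OF assms(2), of _ "(_, 0)"]
    by (intro linearI) auto
  moreover have "L (y, 0) = 0" if "\<forall>x\<in>F. blinfun_apply y x = 0" for y
    using bound[of y 0] that by simp
  ultimately have "\<exists>z. \<forall>y. L (y, 0) = blinfun_apply y z"
    by (rule linear_functional_eq_evaluation[OF assms(1)])
  then obtain z where z: "\<forall>y. L (y, 0) = blinfun_apply y z" ..
  show thesis
  proof (rule that)
    show "L (y, r) = blinfun_apply y z + r * L (0, 1)" for y r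
      using split[of y r] z by simp
  qed
qed

section \<open>The conjugate on X and Fenchel--Moreau\<close>

text \<open>conj_le g x K says that the Fenchel conjugate of g at x \<in> X \<subseteq> X** is at most K,
  i.e. that y \<mapsto> y x - K is an affine minorant of g.\<close>

definition conj_le :: "(('a::real_normed_vector \<Rightarrow>\<^sub>L real) \<Rightarrow> ereal) \<Rightarrow> 'a \<Rightarrow> real \<Rightarrow> bool" where
  "conj_le g x K \<longleftrightarrow> (\<forall>y r. g y \<le> ereal r \<longrightarrow> blinfun_apply y x - r \<le> K)"

lemma conj_le_mono: "conj_le g x K \<Longrightarrow> K \<le> K' \<Longrightarrow> conj_le g x K'"
  unfolding conj_le_def by force

lemma proper_funE:
  assumes "proper_fun g"
  obtains y0 r0 where "g y0 = ereal r0"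
proof -
  obtain y0 where "g y0 < \<infinity>" "g y0 \<noteq> -\<infinity>" using assms unfolding proper_fun_def by blast
  then show ?thesis using that by (cases "g y0") auto
qed

lemma convex_ereal_epigraph:
  assumes "convex_ereal g"
  shows "convex {v. g (fst v) \<le> ereal (snd v)}"
  unfolding convex_def
proof (intro ballI allI impI)
  fix v w and a b :: real
  assume v: "v \<in> {v. g (fst v) \<le> ereal (snd v)}" and w: "w \<in> {v. g (fst v) \<le> ereal (snd v)}"
    and ab: "0 \<le> a" "0 \<le> b" "a + b = 1"
  consider "a = 0" | "b = 0" | "0 < a" "a < 1" using ab by fastforce
  then show "a *\<^sub>R v + b *\<^sub>R w \<in> {v. g (fst v) \<le> ereal (snd v)}"
  proof cases
    case 3
    then have b: "b = 1 - a" using ab by simp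
    have "g (a *\<^sub>R fst v + (1 - a) *\<^sub>R fst w) \<le> ereal a * g (fst v) + ereal (1 - a) * g (fst w)"
      using assms 3 unfolding convex_ereal_def by blast
    also have "\<dots> \<le> ereal a * ereal (snd v) + ereal (1 - a) * ereal (snd w)"
      using 3 v w by (intro add_mono ereal_mult_left_mono) auto
    finally show ?thesis using b by simp
  qed (use ab v w in auto)
qed

lemma convex_basic_neighbourhood_times_halfline:
  fixes y1 :: "'a::real_normed_vector \<Rightarrow>\<^sub>L real"
  shows "convex {v :: ('a \<Rightarrow>\<^sub>L real) \<times> real. (\<forall>x\<in>F. \<bar>blinfun_apply (fst v) x - blinfun_apply y1 x\<bar> < \<delta>) \<and> snd v < c}"
proof -
  have "convex {v :: ('a \<Rightarrow>\<^sub>L real) \<times> real. \<bar>blinfun_apply (fst v) x - blinfun_apply y1 x\<bar> < \<delta>}" for x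
  proof -
    have "linear (\<lambda>v :: ('a \<Rightarrow>\<^sub>L real) \<times> real. blinfun_apply (fst v) x)" by (intro linearI) auto
    moreover have "{v :: ('a \<Rightarrow>\<^sub>L real) \<times> real. \<bar>blinfun_apply (fst v) x - blinfun_apply y1 x\<bar> < \<delta>}
        = (\<lambda>v. blinfun_apply (fst v) x) -` ball (blinfun_apply y1 x) \<delta>"
      by (auto simp: dist_real_def abs_minus_commute)
    ultimately show ?thesis using convex_linear_vimage[OF _ convex_ball] by metis
  qed
  moreover have "convex (snd -` {..<c} :: (('a \<Rightarrow>\<^sub>L real) \<times> real) set)"
    by (rule convex_linear_vimage) (auto intro: bounded_linear.linear[OF bounded_linear_snd])
  moreover have "{v :: ('a \<Rightarrow>\<^sub>L real) \<times> real. (\<forall>x\<in>F. \<bar>blinfun_apply (fst v) x - blinfun_apply y1 x\<bar> < \<delta>) \<and> snd v < c}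
      = (\<Inter>x\<in>F. {v. \<bar>blinfun_apply (fst v) x - blinfun_apply y1 x\<bar> < \<delta>}) \<inter> snd -` {..<c}"
    by auto
  ultimately show ?thesis by (simp only:) (intro convex_Int convex_INT)
qed

text \<open>A basic weak* neighbourhood of y1 times a half-line below the level c misses the
  epigraph by weak* lower semicontinuity; the separating functional is bounded by
  finitely many evaluations, hence of the form (y, r) \<mapsto> y x + s r.\<close>

lemma epigraph_strict_separation:
  fixes g :: "('a::real_normed_vector \<Rightarrow>\<^sub>L real) \<Rightarrow> ereal"
  assumes "proper_fun g" "convex_ereal g" "weak_star_lsc g" "ereal c0 < g y1"
  obtains x s \<tau> where "\<tau> > 0" "s \<le> 0"
    "\<And>y r. g y \<le> ereal r \<Longrightarrow> blinfun_apply y x + s * r + \<tau> \<le> blinfun_apply y1 x + s * c0"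
proof -
  obtain c where c: "c0 < c" "ereal c < g y1" using ereal_dense2[OF assms(4)] by auto
  have "closedin weak_star_topology {y. g y \<le> ereal c}" using assms(3) unfolding weak_star_lsc_def by blast
  moreover have "y1 \<notin> {y. g y \<le> ereal c}" using c(2) by (simp add: not_le)
  ultimately obtain F \<delta>0 where F: "finite F" "\<delta>0 > 0"
    and above: "\<And>y. (\<forall>x\<in>F. \<bar>blinfun_apply y x - blinfun_apply y1 x\<bar> < \<delta>0) \<Longrightarrow> \<not> g y \<le> ereal c"
    by (rule weak_star_closed_avoids_basic_neighbourhood) blast
  obtain y0 r0 where y0: "g y0 = ereal r0" using proper_funE[OF assms(1)] .
  define q :: "('a \<Rightarrow>\<^sub>L real) \<times> real \<Rightarrow> real" where
    "q v = (\<Sum>x\<in>F. \<bar>blinfun_apply (fst v) x\<bar>) + \<bar>snd v\<bar>" for v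
  define C :: "(('a \<Rightarrow>\<^sub>L real) \<times> real) set" where "C = {v. g (fst v) \<le> ereal (snd v)}"
  define U :: "(('a \<Rightarrow>\<^sub>L real) \<times> real) set" where
    "U = {v. (\<forall>x\<in>F. \<bar>blinfun_apply (fst v) x - blinfun_apply y1 x\<bar> < \<delta>0) \<and> snd v < c}"
  define \<delta> where "\<delta> = min \<delta>0 (c - c0)"
  have q_add: "q (v + w) \<le> q v + q w" for v w
  proof -
    have "(\<Sum>x\<in>F. \<bar>blinfun_apply (fst (v + w)) x\<bar>)
        \<le> (\<Sum>x\<in>F. \<bar>blinfun_apply (fst v) x\<bar> + \<bar>blinfun_apply (fst w) x\<bar>)"
      by (intro sum_mono) (simp add: abs_triangle_ineq)
    then show ?thesis unfolding q_def by (simp add: sum.distrib abs_triangle_ineq add_mono)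
  qed
  have q_scale: "q (t *\<^sub>R v) = \<bar>t\<bar> * q v" for t v
    unfolding q_def by (simp add: abs_mult sum_distrib_left algebra_simps)
  have "convex U" unfolding U_def by (rule convex_basic_neighbourhood_times_halfline)
  moreover have "(y1, c0) + v \<in> U" if "q v < \<delta>" for v
  proof -
    have "\<bar>blinfun_apply (fst v) x\<bar> \<le> (\<Sum>x\<in>F. \<bar>blinfun_apply (fst v) x\<bar>)" if "x \<in> F" for x
      using F(1) that by (intro member_le_sum) auto
    then have "\<bar>blinfun_apply (fst v) x\<bar> \<le> q v" if "x \<in> F" for x
      using that unfolding q_def by fastforce
    moreover have "\<bar>snd v\<bar> \<le> q v" unfolding q_def by (simp add: sum_nonneg)
    ultimately show ?thesis using \<open>q v < \<delta>\<close> unfolding U_def \<delta>_def by fastforce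
  qed
  moreover have "C \<inter> U = {}"
    using above unfolding C_def U_def by (force simp: order_trans[OF _ ereal_less_eq(3)[THEN iffD2]])
  moreover have "convex C" "(y0, r0) \<in> C" "(y1, c0) \<in> U" "\<delta> > 0"
    using convex_ereal_epigraph[OF assms(2)] y0 F(2) c(1) unfolding C_def U_def \<delta>_def by auto
  ultimately obtain L \<tau> where L: "linear L" "\<And>v. \<bar>L v\<bar> \<le> q v / \<delta>" "\<tau> > 0"
    "\<And>v. v \<in> C \<Longrightarrow> L v + \<tau> \<le> L (y1, c0)"
    using separating_linear_functional[OF q_add q_scale] by metis
  have "\<bar>L (y, r)\<bar> \<le> ((\<Sum>x\<in>F. \<bar>blinfun_apply y x\<bar>) + \<bar>r\<bar>) / \<delta>" for y r
    using L(2)[of "(y, r)"] unfolding q_def by simp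
  then obtain z s where z: "\<And>y r. L (y, r) = blinfun_apply y z + r * s"
    by (rule linear_bounded_by_evaluations[OF F(1) L(1)]) blast
  have sep: "blinfun_apply y z + r * s + \<tau> \<le> blinfun_apply y1 z + c0 * s" if "g y \<le> ereal r" for y r
    using L(4)[of "(y, r)"] that unfolding C_def z by simp
  have "s \<le> 0"
  proof (rule ccontr)
    assume "\<not> s \<le> 0"
    then have "s > 0" by simp
    define A where "A = blinfun_apply y1 z + c0 * s - blinfun_apply y0 z"
    define r where "r = max r0 (A / s + 1)"
    have "g y0 \<le> ereal r" using y0 unfolding r_def by simp
    then have "blinfun_apply y0 z + r * s + \<tau> \<le> blinfun_apply y1 z + c0 * s" by (rule sep)
    moreover have "(A / s + 1) * s \<le> r * s" using \<open>s > 0\<close> unfolding r_def by (intro mult_right_mono) auto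
    moreover have "(A / s + 1) * s = A + s" using \<open>s > 0\<close> by (simp add: field_simps)
    ultimately show False using \<open>s > 0\<close> L(3) unfolding A_def by linarith
  qed
  then show thesis using that[of \<tau> s z] sep L(3) by (simp add: mult.commute)
qed

lemma conj_le_of_separation:
  assumes "s < 0" and "\<And>y r. g y \<le> ereal r \<Longrightarrow> blinfun_apply y x + s * r + \<tau> \<le> B"
  shows "conj_le g ((- 1 / s) *\<^sub>R x) ((B - \<tau>) / (- s))"
  unfolding conj_le_def
proof (intro allI impI)
  fix y r assume "g y \<le> ereal r"
  then have "(blinfun_apply y x + s * r) / (- s) \<le> (B - \<tau>) / (- s)"
    using assms by (intro divide_right_mono) force+
  moreover have "(blinfun_apply y x + s * r) / (- s) = blinfun_apply y ((- 1 / s) *\<^sub>R x) - r"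
    using assms(1) by (simp add: field_simps)
  ultimately show "blinfun_apply y ((- 1 / s) *\<^sub>R x) - r \<le> (B - \<tau>) / (- s)" by simp
qed

lemma exists_conj_le:
  fixes g :: "('a::real_normed_vector \<Rightarrow>\<^sub>L real) \<Rightarrow> ereal"
  assumes "proper_fun g" "convex_ereal g" "weak_star_lsc g"
  obtains x K where "conj_le g x K"
proof -
  obtain y0 r0 where y0: "g y0 = ereal r0" using proper_funE[OF assms(1)] .
  then have "ereal (r0 - 1) < g y0" by simp
  then obtain x s \<tau> where "\<tau> > 0"
    and sep: "\<And>y r. g y \<le> ereal r \<Longrightarrow> blinfun_apply y x + s * r + \<tau> \<le> blinfun_apply y0 x + s * (r0 - 1)"
    using epigraph_strict_separation[OF assms] by metis
  have "blinfun_apply y0 x + s * r0 + \<tau> \<le> blinfun_apply y0 x + s * (r0 - 1)" using sep y0 by simp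
  then have "s < 0" using \<open>\<tau> > 0\<close> by (simp add: algebra_simps)
  from conj_le_of_separation[OF this sep] show thesis by (rule that)
qed

text \<open>Fenchel--Moreau: the weak*-continuous affine minorants y \<mapsto> y x - K of g have
  supremum g. A vertical separating hyperplane (s = 0) is tilted by adding it to a
  fixed minorant.\<close>

lemma exists_affine_minorant_above:
  fixes g :: "('a::real_normed_vector \<Rightarrow>\<^sub>L real) \<Rightarrow> ereal"
  assumes "proper_fun g" "convex_ereal g" "weak_star_lsc g" "ereal c < g y1"
  obtains x K where "conj_le g x K" "c < blinfun_apply y1 x - K"
proof -
  obtain x0 K0 where x0: "conj_le g x0 K0" using exists_conj_le[OF assms(1-3)] .
  obtain x s \<tau> where "\<tau> > 0" "s \<le> 0"
    and sep: "\<And>y r. g y \<le> ereal r \<Longrightarrow> blinfun_apply y x + s * r + \<tau> \<le> blinfun_apply y1 x + s * c"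
    using epigraph_strict_separation[OF assms] by metis
  show thesis
  proof (cases "s = 0")
    case False
    then have "s < 0" using \<open>s \<le> 0\<close> by simp
    have "blinfun_apply y1 ((- 1 / s) *\<^sub>R x) - (blinfun_apply y1 x + s * c - \<tau>) / (- s) = c + \<tau> / (- s)"
      using \<open>s < 0\<close> by (simp add: field_simps)
    moreover have "\<tau> / (- s) > 0" using \<open>s < 0\<close> \<open>\<tau> > 0\<close> by (simp add: divide_pos_neg)
    ultimately show thesis using that[OF conj_le_of_separation[OF \<open>s < 0\<close> sep]] by simp
  next
    case True
    define t where "t = (\<bar>c - blinfun_apply y1 x0 + K0\<bar> + 1) / \<tau>"
    have "t > 0" unfolding t_def using \<open>\<tau> > 0\<close> by simp
    have "conj_le g (x0 + t *\<^sub>R x) (K0 + t * (blinfun_apply y1 x - \<tau>))"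
      unfolding conj_le_def
    proof (intro allI impI)
      fix y r assume yr: "g y \<le> ereal r"
      then have "blinfun_apply y x0 - r \<le> K0" using x0 unfolding conj_le_def by blast
      moreover have "t * blinfun_apply y x \<le> t * (blinfun_apply y1 x - \<tau>)"
        using sep[OF yr] True \<open>t > 0\<close> by (intro mult_left_mono) auto
      ultimately show "blinfun_apply y (x0 + t *\<^sub>R x) - r \<le> K0 + t * (blinfun_apply y1 x - \<tau>)"
        by (simp add: algebra_simps)
    qed
    moreover have "t * \<tau> = \<bar>c - blinfun_apply y1 x0 + K0\<bar> + 1" unfolding t_def using \<open>\<tau> > 0\<close> by simp
    then have "c < blinfun_apply y1 (x0 + t *\<^sub>R x) - (K0 + t * (blinfun_apply y1 x - \<tau>))"
      by (simp add: algebra_simps)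
    ultimately show thesis by (rule that)
  qed
qed

text \<open>Where no conj_le g x K holds, the supremum below is a junk value.\<close>

definition conjugate :: "(('a::real_normed_vector \<Rightarrow>\<^sub>L real) \<Rightarrow> ereal) \<Rightarrow> 'a \<Rightarrow> real" where
  "conjugate g x = Sup {blinfun_apply y x - r | y r. g y \<le> ereal r}"

lemma conj_le_conjugate:
  assumes "proper_fun g" "conj_le g x K"
  shows "conjugate g x \<le> K" "conj_le g x (conjugate g x)"
proof -
  obtain y0 r0 where "g y0 = ereal r0" using proper_funE[OF assms(1)] .
  then have "blinfun_apply y0 x - r0 \<in> {blinfun_apply y x - r | y r. g y \<le> ereal r}" by fastforce
  then have ne: "{blinfun_apply y x - r | y r. g y \<le> ereal r} \<noteq> {}" by blast
  have ub: "e \<le> K" if "e \<in> {blinfun_apply y x - r | y r. g y \<le> ereal r}" for e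
    using that assms(2) unfolding conj_le_def by auto
  show "conjugate g x \<le> K" unfolding conjugate_def using ne ub by (rule cSup_least)
  show "conj_le g x (conjugate g x)" unfolding conj_le_def conjugate_def
  proof (intro allI impI)
    fix y r assume "g y \<le> ereal r"
    then have "blinfun_apply y x - r \<in> {blinfun_apply y x - r | y r. g y \<le> ereal r}" by blast
    moreover have "bdd_above {blinfun_apply y x - r | y r. g y \<le> ereal r}" using ub by (rule bdd_aboveI)
    ultimately show "blinfun_apply y x - r \<le> Sup {blinfun_apply y x - r | y r. g y \<le> ereal r}"
      by (rule cSup_upper)
  qed
qed

lemma closed_conj_le:
  assumes "continuous_on UNIV h"
  shows "closed {x. conj_le g x (h x)}"
proof -
  have "{x. conj_le g x (h x)}
      = (\<Inter>p\<in>{p. g (fst p) \<le> ereal (snd p)}. {x. blinfun_apply (fst p) x - snd p \<le> h x})"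
    unfolding conj_le_def by auto
  moreover have "closed {x. blinfun_apply (fst p) x - snd p \<le> h x}" for p
    by (intro closed_Collect_le continuous_on_diff continuous_on_const assms
          linear_continuous_on[OF blinfun.bounded_linear_right])
  ultimately show ?thesis by (simp add: closed_INT)
qed

lemma convex_conj_le_epigraph: "convex {v. conj_le g (fst v) (snd v)}"
  unfolding convex_def
proof (intro ballI allI impI, unfold mem_Collect_eq)
  fix v w and a b :: real
  assume v: "conj_le g (fst v) (snd v)" and w: "conj_le g (fst w) (snd w)" and ab: "0 \<le> a" "0 \<le> b" "a + b = 1"
  show "conj_le g (fst (a *\<^sub>R v + b *\<^sub>R w)) (snd (a *\<^sub>R v + b *\<^sub>R w))"
    unfolding conj_le_def
  proof (intro allI impI)
    fix y r assume "g y \<le> ereal r"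
    then have "a * (blinfun_apply y (fst v) - r) \<le> a * snd v" "b * (blinfun_apply y (fst w) - r) \<le> b * snd w"
      using v w ab unfolding conj_le_def by (simp_all add: mult_left_mono)
    moreover have "blinfun_apply y (fst (a *\<^sub>R v + b *\<^sub>R w)) - r
        = a * (blinfun_apply y (fst v) - r) + b * (blinfun_apply y (fst w) - r)"
      using ab by (simp add: algebra_simps flip: distrib_right)
    ultimately show "blinfun_apply y (fst (a *\<^sub>R v + b *\<^sub>R w)) - r \<le> snd (a *\<^sub>R v + b *\<^sub>R w)" by simp
  qed
qed

section \<open>Ekeland's variational principle\<close>

locale ekeland_setting =
  fixes \<phi> :: "'a::complete_space \<Rightarrow> real" and K :: "'a set" and \<alpha> :: real and m :: real
  assumes closed_K: "closed K"
    and bounded_below: "\<And>x. x \<in> K \<Longrightarrow> m \<le> \<phi> x"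
    and lsc: "\<And>c. closed {x\<in>K. \<phi> x \<le> c}"
    and \<alpha>_pos: "\<alpha> > 0"
begin

definition ekeland_set :: "'a \<Rightarrow> 'a set" where
  "ekeland_set x = {y\<in>K. \<phi> y + \<alpha> * dist x y \<le> \<phi> x}"

lemma ekeland_set_eq: "ekeland_set x = K \<inter> (\<Inter>t. cball x t \<union> {y\<in>K. \<phi> y \<le> \<phi> x - \<alpha> * t})"
proof (intro equalityI subsetI)
  fix y assume y: "y \<in> ekeland_set x"
  have "\<alpha> * t \<le> \<alpha> * dist x y" if "\<not> dist x y \<le> t" for t using that \<alpha>_pos by simp
  then show "y \<in> K \<inter> (\<Inter>t. cball x t \<union> {y\<in>K. \<phi> y \<le> \<phi> x - \<alpha> * t})"
    using y unfolding ekeland_set_def by fastforce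
next
  fix y assume y: "y \<in> K \<inter> (\<Inter>t. cball x t \<union> {y\<in>K. \<phi> y \<le> \<phi> x - \<alpha> * t})"
  have "\<phi> y + \<alpha> * dist x y \<le> \<phi> x + e" if "e > 0" for e
  proof -
    have "y \<notin> cball x (dist x y - e / \<alpha>)" using divide_pos_pos[OF that \<alpha>_pos] by simp
    then have "\<phi> y \<le> \<phi> x - \<alpha> * (dist x y - e / \<alpha>)" using y by blast
    then show ?thesis using \<alpha>_pos by (simp add: algebra_simps)
  qed
  then show "y \<in> ekeland_set x" using y field_le_epsilon unfolding ekeland_set_def by blast
qed

lemma closed_ekeland_set: "closed (ekeland_set x)"
  unfolding ekeland_set_eq by (intro closed_Int closed_K closed_INT ballI closed_Un closed_cball lsc)

lemma ekeland_set_refl: "x \<in> K \<Longrightarrow> x \<in> ekeland_set x"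
  unfolding ekeland_set_def by simp

lemma ekeland_set_subset: "ekeland_set x \<subseteq> K"
  unfolding ekeland_set_def by auto

lemma ekeland_set_trans:
  assumes "y \<in> ekeland_set x"
  shows "ekeland_set y \<subseteq> ekeland_set x"
proof
  fix w assume w: "w \<in> ekeland_set y"
  have "\<alpha> * dist x w \<le> \<alpha> * dist x y + \<alpha> * dist y w"
    using dist_triangle[of x w y] \<alpha>_pos by (simp flip: distrib_left)
  then show "w \<in> ekeland_set x" using w assms unfolding ekeland_set_def by auto
qed

lemma ekeland_set_diameter:
  assumes "y \<in> ekeland_set x" "x \<in> K" "\<phi> y \<le> Inf (\<phi> ` ekeland_set x) + e" "w \<in> ekeland_set y"
  shows "\<alpha> * dist y w \<le> e"
proof -
  have "w \<in> ekeland_set x" using ekeland_set_trans assms(1,4) by blast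
  then have "Inf (\<phi> ` ekeland_set x) \<le> \<phi> w"
    using bounded_below ekeland_set_subset by (intro cInf_lower bdd_belowI2) auto
  then show ?thesis using assms(3,4) unfolding ekeland_set_def by simp
qed

text \<open>Choosing each point almost minimal in the ekeland set of its predecessor makes the
  nested closed sets shrink geometrically.\<close>

lemma ekeland_nested_sequence:
  assumes "x0 \<in> K"
  obtains xs where "xs 0 = x0" "\<And>n. xs n \<in> K"
    "\<And>n. xs (Suc n) \<in> ekeland_set (xs n)"
    "\<And>n w. w \<in> ekeland_set (xs (Suc n)) \<Longrightarrow> \<alpha> * dist (xs (Suc n)) w \<le> (1 / 2) ^ n"
proof -
  have "\<exists>y. y \<in> ekeland_set x \<and> \<phi> y \<le> Inf (\<phi> ` ekeland_set x) + (1 / 2) ^ n" if x: "x \<in> K" for x n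
  proof -
    have "Inf (\<phi> ` ekeland_set x) < Inf (\<phi> ` ekeland_set x) + (1 / 2) ^ n" by simp
    then obtain v where "v \<in> \<phi> ` ekeland_set x" "v < Inf (\<phi> ` ekeland_set x) + (1 / 2) ^ n"
      using cInf_lessD[of "\<phi> ` ekeland_set x"] ekeland_set_refl[OF x] by blast
    then show ?thesis by force
  qed
  then obtain next_pt where next_pt: "\<And>x n. x \<in> K \<Longrightarrow>
      next_pt x n \<in> ekeland_set x \<and> \<phi> (next_pt x n) \<le> Inf (\<phi> ` ekeland_set x) + (1 / 2) ^ n"
    by metis
  define xs where "xs = rec_nat x0 (\<lambda>n x. next_pt x n)"
  have xs_Suc: "xs (Suc n) = next_pt (xs n) n" for n unfolding xs_def by simp
  have xs_K: "xs n \<in> K" for n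
    by (induction n) (use assms next_pt ekeland_set_subset in \<open>auto simp: xs_def\<close>)
  show thesis
  proof (rule that)
    show "xs 0 = x0" unfolding xs_def by simp
    show "xs n \<in> K" for n by (rule xs_K)
    show "xs (Suc n) \<in> ekeland_set (xs n)" for n using next_pt[OF xs_K] xs_Suc by simp
    show "\<alpha> * dist (xs (Suc n)) w \<le> (1 / 2) ^ n" if "w \<in> ekeland_set (xs (Suc n))" for n w
    proof -
      have "xs (Suc n) \<in> ekeland_set (xs n)"
        and "\<phi> (xs (Suc n)) \<le> Inf (\<phi> ` ekeland_set (xs n)) + (1 / 2) ^ n"
        using next_pt[OF xs_K] xs_Suc by auto
      then show ?thesis using ekeland_set_diameter xs_K that by blast
    qed
  qed
qed

theorem ekeland_variational_principle:
  assumes "x0 \<in> K"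
  obtains z where "z \<in> K" "\<phi> z \<le> \<phi> x0" "\<And>x. x \<in> K \<Longrightarrow> \<phi> z \<le> \<phi> x + \<alpha> * dist x z"
proof -
  obtain xs where xs: "xs 0 = x0" "\<And>n. xs n \<in> K" "\<And>n. xs (Suc n) \<in> ekeland_set (xs n)"
    and shrink: "\<And>n w. w \<in> ekeland_set (xs (Suc n)) \<Longrightarrow> \<alpha> * dist (xs (Suc n)) w \<le> (1 / 2) ^ n"
    using ekeland_nested_sequence[OF assms] by metis
  define T where "T n = ekeland_set (xs n)" for n
  have T_Suc: "T (Suc n) \<subseteq> T n" for n using xs(3) ekeland_set_trans unfolding T_def by blast
  have T_decseq: "T n \<subseteq> T m" if "m \<le> n" for m n
    using that by (induction n rule: dec_induct) (use T_Suc in blast)+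
  have T_diam: "dist v w \<le> 2 * (1 / 2) ^ n / \<alpha>" if "v \<in> T (Suc n)" "w \<in> T (Suc n)" for n v w
  proof -
    have "\<alpha> * dist v w \<le> \<alpha> * dist (xs (Suc n)) v + \<alpha> * dist (xs (Suc n)) w"
      using dist_triangle3[of v w "xs (Suc n)"] \<alpha>_pos by (simp flip: distrib_left)
    also have "\<dots> \<le> 2 * (1 / 2) ^ n" using shrink that unfolding T_def by (smt (verit))
    finally show ?thesis using \<alpha>_pos by (simp add: pos_le_divide_eq mult.commute)
  qed
  have small: "\<exists>n. 2 * (1 / 2) ^ n / \<alpha> < e" if e: "e > 0" for e
  proof -
    obtain n where "(1 / 2 :: real) ^ n < e * \<alpha> / 2"
      using real_arch_pow_inv[of "e * \<alpha> / 2" "1 / 2"] e \<alpha>_pos by auto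
    then show ?thesis using \<alpha>_pos by (auto simp: field_simps)
  qed
  obtain z where z: "\<And>n. z \<in> T n"
  proof (rule decreasing_closed_nest[of T])
    show "closed (T n)" "T n \<noteq> {}" for n
      unfolding T_def using closed_ekeland_set ekeland_set_refl xs(2) by blast+
    show "\<And>m n. m \<le> n \<Longrightarrow> T n \<subseteq> T m" by (rule T_decseq)
    fix e :: real assume "e > 0"
    then obtain n where "2 * (1 / 2) ^ n / \<alpha> < e" using small by blast
    then show "\<exists>n. \<forall>x\<in>T n. \<forall>y\<in>T n. dist x y < e" using T_diam by (meson le_less_trans)
  qed blast
  have "z \<in> ekeland_set x0" using z[of 0] xs(1) unfolding T_def by simp
  then have "z \<in> K" "\<phi> z \<le> \<phi> x0"
    unfolding ekeland_set_def using \<alpha>_pos by (auto intro: order_trans[rotated])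
  moreover have "\<phi> z \<le> \<phi> x + \<alpha> * dist x z" if "x \<in> K" for x
  proof (rule ccontr)
    assume *: "\<not> \<phi> z \<le> \<phi> x + \<alpha> * dist x z"
    then have "x \<in> ekeland_set z" unfolding ekeland_set_def using that by (simp add: dist_commute)
    then have "x \<in> T n" for n using ekeland_set_trans z unfolding T_def by blast
    then have "dist x z \<le> 2 * (1 / 2) ^ n / \<alpha>" for n using T_diam z by blast
    then have "x = z" using small by (meson dist_le_zero_iff not_le order_le_less_trans zero_less_dist_iff)
    then show False using * by simp
  qed
  ultimately show thesis by (rule that)
qed

end

section \<open>A sandwich theorem on a ball\<close>

lemma lipschitz_on_UNIV_lower:
  fixes \<psi> :: "'a::real_normed_vector \<Rightarrow> real"
  assumes "\<Lambda>-lipschitz_on UNIV \<psi>"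
  shows "\<psi> x - \<Lambda> * norm (y - x) \<le> \<psi> y"
  using lipschitz_onD[OF assms, of x y] by (simp add: dist_real_def dist_norm norm_minus_commute abs_le_iff)

text \<open>s < 0 says that the hyperplane separating C from the strict hypograph of h over the
  ball is not vertical.\<close>

lemma separating_slope_negative:
  fixes w0 :: "'a::real_normed_vector \<Rightarrow> real"
  assumes "linear w0" "\<tau> > 0"
    and upward: "\<And>x r r'. (x, r) \<in> C \<Longrightarrow> r \<le> r' \<Longrightarrow> (x, r') \<in> C"
    and x1: "(x1, r1) \<in> C" "norm x1 < R"
    and sep: "\<And>x' r' x. (x', r') \<in> C \<Longrightarrow> norm x < R \<Longrightarrow> w0 x' + r' * s \<le> w0 x + (h x - 1) * s"
    and strict: "\<And>x' r'. (x', r') \<in> C \<Longrightarrow> w0 x' + r' * s + \<tau> \<le> (h 0 - 1) * s"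
  shows "s < 0"
proof -
  have "s \<le> 0"
  proof (rule ccontr)
    assume "\<not> s \<le> 0"
    define B where "B = (h 0 - 1) * s"
    define t where "t = max 0 ((B - w0 x1 - r1 * s) / s + 1)"
    have "(x1, r1 + t) \<in> C" using upward[OF x1(1)] unfolding t_def by simp
    then have "w0 x1 + (r1 + t) * s + \<tau> \<le> B" unfolding B_def by (rule strict)
    moreover have "((B - w0 x1 - r1 * s) / s + 1) * s \<le> t * s"
      using \<open>\<not> s \<le> 0\<close> unfolding t_def by (intro mult_right_mono) auto
    moreover have "((B - w0 x1 - r1 * s) / s + 1) * s = B - w0 x1 - r1 * s + s"
      using \<open>\<not> s \<le> 0\<close> by (simp add: field_simps)
    ultimately show False using \<open>\<not> s \<le> 0\<close> \<open>\<tau> > 0\<close> by (simp add: algebra_simps)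
  qed
  moreover have "s \<noteq> 0"
  proof
    assume "s = 0"
    then have "w0 x1 + \<tau> \<le> 0" using strict[OF x1(1)] by simp
    txt \<open>A vertical hyperplane would make w0 x1 a minimum of w0 near x1, forcing w0 x1 \<ge> 0.\<close>
    define \<epsilon> where "\<epsilon> = (R - norm x1) / (norm x1 + 1)"
    have "\<epsilon> > 0" unfolding \<epsilon>_def using x1(2) by (simp add: add_nonneg_pos)
    have "norm x1 / (norm x1 + 1) < 1" by (simp add: divide_less_eq add_nonneg_pos)
    then have "(R - norm x1) * (norm x1 / (norm x1 + 1)) < (R - norm x1) * 1"
      using x1(2) by (intro mult_strict_left_mono) auto
    then have "\<epsilon> * norm x1 < R - norm x1" unfolding \<epsilon>_def by simp
    moreover have "norm ((1 + \<epsilon>) *\<^sub>R x1) = (1 + \<epsilon>) * norm x1"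
      using \<open>\<epsilon> > 0\<close> by (metis abs_of_pos add_pos_pos norm_scaleR zero_less_one)
    ultimately have "norm ((1 + \<epsilon>) *\<^sub>R x1) < R" by (simp add: distrib_right)
    then have "w0 x1 \<le> w0 ((1 + \<epsilon>) *\<^sub>R x1)" using sep[OF x1(1)] \<open>s = 0\<close> by fastforce
    also have "\<dots> = w0 x1 + \<epsilon> * w0 x1"
      using linear_scale[OF assms(1), of "1 + \<epsilon>" x1] by (simp add: distrib_right del: scaleR_add_left)
    finally show False using \<open>w0 x1 + \<tau> \<le> 0\<close> \<open>\<epsilon> > 0\<close> \<open>\<tau> > 0\<close> by (simp add: zero_le_mult_iff)
  qed
  ultimately show ?thesis by simp
qed

lemma convex_strict_hypograph_on_ball:
  fixes h :: "'a::real_normed_vector \<Rightarrow> real"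
  assumes "concave_on UNIV h"
  shows "convex {v. norm (fst v) < R \<and> snd v < h (fst v)}"
proof -
  have "convex {v :: 'a \<times> real. snd v < h (fst v)}"
    unfolding convex_def
  proof (intro ballI allI impI, unfold mem_Collect_eq)
    fix v w :: "'a \<times> real" and a b :: real
    assume v: "snd v < h (fst v)" and w: "snd w < h (fst w)" and ab: "0 \<le> a" "0 \<le> b" "a + b = 1"
    have "a * snd v + b * snd w < a * h (fst v) + b * h (fst w)"
    proof (cases "a = 0")
      case True
      then show ?thesis using w ab by simp
    next
      case False
      then have "a * snd v < a * h (fst v)" using v ab by simp
      moreover have "b * snd w \<le> b * h (fst w)" using w ab by (simp add: mult_left_mono)
      ultimately show ?thesis by simp
    qed
    also have "\<dots> \<le> h (a *\<^sub>R fst v + b *\<^sub>R fst w)" using assms ab unfolding concave_on_iff by blast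
    finally show "snd (a *\<^sub>R v + b *\<^sub>R w) < h (fst (a *\<^sub>R v + b *\<^sub>R w))" by simp
  qed
  moreover have "{v. norm (fst v) < R \<and> snd v < h (fst v)} = fst -` ball 0 R \<inter> {v. snd v < h (fst v)}"
    by auto
  ultimately show ?thesis
    by (simp add: convex_Int convex_linear_vimage bounded_linear.linear[OF bounded_linear_fst])
qed

lemma ball_hypograph_separation:
  fixes C :: "('a::real_normed_vector \<times> real) set" and \<psi> :: "'a \<Rightarrow> real"
  assumes "convex C" and upward: "\<And>x r r'. (x, r) \<in> C \<Longrightarrow> r \<le> r' \<Longrightarrow> (x, r') \<in> C"
    and x1: "(x1, r1) \<in> C" "norm x1 < R"
    and concave: "concave_on UNIV \<psi>" and lip: "\<Lambda>-lipschitz_on UNIV \<psi>"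
    and above: "\<And>x r. (x, r) \<in> C \<Longrightarrow> norm x < R \<Longrightarrow> c + \<psi> x - \<psi> z \<le> r"
  obtains w :: "'a \<Rightarrow>\<^sub>L real"
  where "\<forall>x' r' x r. (x', r') \<in> C \<longrightarrow> norm x < R \<longrightarrow> r < c + \<psi> x - \<psi> z \<longrightarrow> w x' - r' \<le> w x - r"
proof -
  define h where "h x = c + \<psi> x - \<psi> z" for x
  define q :: "'a \<times> real \<Rightarrow> real" where "q v = norm (fst v) + \<bar>snd v\<bar>" for v
  define U where "U = {v. norm (fst v) < R \<and> snd v < h (fst v)}"
  define u0 where "u0 = (0 :: 'a, h 0 - 1)"
  define \<delta> where "\<delta> = min R (1 / (\<Lambda> + 1))"
  have "\<Lambda> \<ge> 0" using lipschitz_on_nonneg[OF lip] .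
  have "R > 0" using x1(2) norm_ge_zero[of x1] by linarith
  then have "\<delta> > 0" unfolding \<delta>_def using \<open>\<Lambda> \<ge> 0\<close> by simp
  have q_add: "q (v + w) \<le> q v + q w" for v w
    unfolding q_def using norm_triangle_ineq[of "fst v" "fst w"] abs_triangle_ineq[of "snd v" "snd w"] by simp
  have q_scale: "q (t *\<^sub>R v) = \<bar>t\<bar> * q v" for t v unfolding q_def by (simp add: abs_mult algebra_simps)
  have "concave_on UNIV h"
    unfolding h_def using concave by (intro concave_on_diff concave_on_add) (auto simp: concave_on_const convex_on_const)
  then have "convex U" unfolding U_def by (rule convex_strict_hypograph_on_ball)
  moreover have "u0 + v \<in> U" if "q v < \<delta>" for v
  proof -
    have qv: "q v < R" "q v < 1 / (\<Lambda> + 1)" using that unfolding \<delta>_def by simp_all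
    then have "(\<Lambda> + 1) * q v < 1" using \<open>\<Lambda> \<ge> 0\<close> by (simp add: less_divide_eq mult.commute)
    moreover have "(\<Lambda> + 1) * q v = \<Lambda> * norm (fst v) + (\<Lambda> * \<bar>snd v\<bar> + norm (fst v)) + \<bar>snd v\<bar>"
      unfolding q_def by (simp add: algebra_simps)
    moreover have "0 \<le> \<Lambda> * \<bar>snd v\<bar> + norm (fst v)" using \<open>\<Lambda> \<ge> 0\<close> by simp
    ultimately have "snd v + \<Lambda> * norm (fst v) < 1" using abs_ge_self[of "snd v"] by linarith
    moreover have "h 0 - \<Lambda> * norm (fst v) \<le> h (fst v)"
      using lipschitz_on_UNIV_lower[OF lip, of 0 "fst v"] unfolding h_def by simp
    moreover have "norm (fst v) < R" using qv(1) abs_ge_zero[of "snd v"] unfolding q_def by linarith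
    ultimately show ?thesis unfolding U_def u0_def by simp
  qed
  moreover have "u0 \<in> U" using calculation(2)[of 0] \<open>\<delta> > 0\<close> unfolding q_def by simp
  moreover have "C \<inter> U = {}" using above unfolding U_def h_def by force
  ultimately obtain L \<tau> where L: "linear L" "\<And>v. \<bar>L v\<bar> \<le> q v / \<delta>" "\<tau> > 0"
    and sep: "\<And>v u. v \<in> C \<Longrightarrow> u \<in> U \<Longrightarrow> L v \<le> L u" and strict: "\<And>v. v \<in> C \<Longrightarrow> L v + \<tau> \<le> L u0"
    using separating_linear_functional[OF q_add q_scale \<open>convex C\<close> x1(1)] \<open>\<delta> > 0\<close> by metis
  define s where "s = L (0, 1)"
  define w0 where "w0 x = L (x, 0)" for x
  have L_split: "L (x, r) = w0 x + r * s" for x r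
    unfolding w0_def s_def by (rule linear_Pair_split[OF L(1)])
  have "bounded_linear w0"
  proof (rule bounded_linear_intro)
    show "w0 (x + y) = w0 x + w0 y" "w0 (t *\<^sub>R x) = t *\<^sub>R w0 x" for x y t
      unfolding w0_def using linear_add[OF L(1), of "(x, 0)" "(y, 0)"] linear_scale[OF L(1), of t "(x, 0)"] by simp_all
    show "norm (w0 x) \<le> norm x * (1 / \<delta>)" for x using L(2)[of "(x, 0)"] unfolding w0_def q_def by simp
  qed
  have "s < 0"
  proof (rule separating_slope_negative)
    show "linear w0" using \<open>bounded_linear w0\<close> by (rule bounded_linear.linear)
    show "\<And>x r r'. (x, r) \<in> C \<Longrightarrow> r \<le> r' \<Longrightarrow> (x, r') \<in> C" by (rule upward)
    show "w0 x' + r' * s \<le> w0 x + (h x - 1) * s" if "(x', r') \<in> C" "norm x < R" for x' r' x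
      using sep[OF that(1), of "(x, h x - 1)"] that(2) L_split unfolding U_def by simp
    show "w0 x' + r' * s + \<tau> \<le> (h 0 - 1) * s" if "(x', r') \<in> C" for x' r'
      using strict[OF that] L_split linear_0[OF bounded_linear.linear[OF \<open>bounded_linear w0\<close>]]
      unfolding u0_def by simp
  qed (use x1 \<open>\<tau> > 0\<close> in auto)
  define w where "w = (- 1 / s) *\<^sub>R Blinfun w0"
  have w: "blinfun_apply w x = w0 x / (- s)" for x
    unfolding w_def using bounded_linear_Blinfun_apply[OF \<open>bounded_linear w0\<close>] by simp
  show thesis
  proof (rule that, intro allI impI)
    fix x' r' x r assume "(x', r') \<in> C" "norm x < R" "r < c + \<psi> x - \<psi> z"
    then have "w0 x' + r' * s \<le> w0 x + r * s" using sep[of "(x', r')" "(x, r)"] L_split unfolding U_def h_def by simp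
    then have "(w0 x' + r' * s) / (- s) \<le> (w0 x + r * s) / (- s)" using \<open>s < 0\<close> by (intro divide_right_mono) auto
    then show "w x' - r' \<le> w x - r" unfolding w using \<open>s < 0\<close> by (simp add: field_simps)
  qed
qed

lemma ball_sandwich_subgradient:
  fixes C :: "('a::real_normed_vector \<times> real) set" and \<psi> :: "'a \<Rightarrow> real"
  assumes "convex C" "\<And>x r r'. (x, r) \<in> C \<Longrightarrow> r \<le> r' \<Longrightarrow> (x, r') \<in> C"
    and z: "(z, c) \<in> C" "norm z \<le> R" and x1: "(x1, r1) \<in> C" "norm x1 < R"
    and "concave_on UNIV \<psi>" and lip: "\<Lambda>-lipschitz_on UNIV \<psi>"
    and "\<And>x r. (x, r) \<in> C \<Longrightarrow> norm x < R \<Longrightarrow> c + \<psi> x - \<psi> z \<le> r"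
  obtains w :: "'a \<Rightarrow>\<^sub>L real" where "\<And>x r. (x, r) \<in> C \<Longrightarrow> w x - r \<le> w z - c"
    and "\<And>x. norm x < R \<Longrightarrow> \<psi> x - \<psi> z \<le> w x - w z"
proof -
  obtain w :: "'a \<Rightarrow>\<^sub>L real" where
    "\<forall>x' r' x r. (x', r') \<in> C \<longrightarrow> norm x < R \<longrightarrow> r < c + \<psi> x - \<psi> z \<longrightarrow> w x' - r' \<le> w x - r"
    by (rule ball_hypograph_separation[of C x1 r1 R \<psi> \<Lambda> c z]) (assumption | rule x1 assms(1,7,8) | rule assms(9) | rule assms(2))+
  note sep = this[rule_format]
  have "R > 0" using x1(2) norm_ge_zero[of x1] by linarith
  have "\<psi> x - \<psi> z \<le> w x - w z" if "norm x < R" for x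
  proof (rule field_le_epsilon)
    fix e :: real assume "e > 0"
    then have "w z - c \<le> w x - (c + \<psi> x - \<psi> z - e)" using sep[OF z(1) that] by simp
    then show "\<psi> x - \<psi> z \<le> w x - w z + e" by simp
  qed
  moreover have "w x' - r' \<le> w z - c" if "(x', r') \<in> C" for x' r'
  proof (rule field_le_epsilon)
    txt \<open>Approach z from inside the ball along the segment towards 0.\<close>
    fix e :: real assume "e > 0"
    define E where "E = \<Lambda> * norm z - w z"
    define t where "t = min 1 (e / (2 * (\<bar>E\<bar> + 1)))"
    have t: "0 < t" "t \<le> 1" unfolding t_def using \<open>e > 0\<close> by (simp_all add: add_pos_nonneg)
    have "t * E \<le> t * \<bar>E\<bar>" using t by (simp add: mult_left_mono)
    also have "\<dots> \<le> e / (2 * (\<bar>E\<bar> + 1)) * (\<bar>E\<bar> + 1)" unfolding t_def using \<open>e > 0\<close> by (intro mult_mono) (auto simp: add_nonneg_pos)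
    also have "\<dots> = e / 2" using abs_ge_zero[of E] by (simp add: field_simps add_nonneg_pos)
    finally have tE: "t * E \<le> e / 2" .
    define x where "x = (1 - t) *\<^sub>R z"
    have "norm x = (1 - t) * norm z" unfolding x_def using t by simp
    also have "\<dots> \<le> (1 - t) * R" using z(2) t by (intro mult_left_mono) auto
    also have "\<dots> < R" using t \<open>R > 0\<close> by (simp add: algebra_simps zero_less_mult_iff)
    finally have "norm x < R" .
    have "\<psi> z - \<Lambda> * (t * norm z) \<le> \<psi> x"
      using lipschitz_on_UNIV_lower[OF lip, of z x] t unfolding x_def by (simp add: algebra_simps)
    moreover have "w x' - r' \<le> w x - (c + \<psi> x - \<psi> z - e / 2)"
      using sep[OF that \<open>norm x < R\<close>] \<open>e > 0\<close> by simp
    moreover have "w x = w z - t * w z" unfolding x_def by (simp add: algebra_simps)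
    ultimately show "w x' - r' \<le> w z - c + e" using tE unfolding E_def by (simp add: algebra_simps)
  qed
  ultimately show thesis using that by blast
qed

lemma concave_on_linear_minus_norms:
  fixes l :: "'a::real_normed_vector \<Rightarrow>\<^sub>L real"
  assumes "M \<ge> 0" "\<alpha> \<ge> 0"
  shows "concave_on UNIV (\<lambda>x. l x - M * norm x - \<alpha> * norm (x - z))"
  unfolding concave_on_iff
proof (intro conjI ballI allI impI convex_UNIV)
  fix x y :: 'a and a b :: real assume ab: "0 \<le> a" "0 \<le> b" "a + b = 1"
  have "norm (a *\<^sub>R x + b *\<^sub>R y) \<le> a * norm x + b * norm y"
    using norm_triangle_ineq[of "a *\<^sub>R x" "b *\<^sub>R y"] ab by simp
  moreover have "a *\<^sub>R x + b *\<^sub>R y - z = a *\<^sub>R (x - z) + b *\<^sub>R (y - z)"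
    using ab by (simp add: algebra_simps flip: scaleR_add_left)
  then have "norm (a *\<^sub>R x + b *\<^sub>R y - z) \<le> a * norm (x - z) + b * norm (y - z)"
    using norm_triangle_ineq[of "a *\<^sub>R (x - z)" "b *\<^sub>R (y - z)"] ab by simp
  ultimately have "M * norm (a *\<^sub>R x + b *\<^sub>R y) + \<alpha> * norm (a *\<^sub>R x + b *\<^sub>R y - z)
      \<le> M * (a * norm x + b * norm y) + \<alpha> * (a * norm (x - z) + b * norm (y - z))"
    using assms by (intro add_mono mult_left_mono)
  moreover have "a * (l x - M * norm x - \<alpha> * norm (x - z)) + b * (l y - M * norm y - \<alpha> * norm (y - z))
      = a * l x + b * l y - (M * (a * norm x + b * norm y) + \<alpha> * (a * norm (x - z) + b * norm (y - z)))"
    by (simp add: algebra_simps)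
  moreover have "l (a *\<^sub>R x + b *\<^sub>R y) = a * l x + b * l y" by simp
  ultimately show "a * (l x - M * norm x - \<alpha> * norm (x - z)) + b * (l y - M * norm y - \<alpha> * norm (y - z))
      \<le> l (a *\<^sub>R x + b *\<^sub>R y) - M * norm (a *\<^sub>R x + b *\<^sub>R y) - \<alpha> * norm (a *\<^sub>R x + b *\<^sub>R y - z)"
    by linarith
qed

lemma lipschitz_on_linear_minus_norms:
  fixes l :: "'a::real_normed_vector \<Rightarrow>\<^sub>L real"
  assumes "M \<ge> 0" "\<alpha> \<ge> 0"
  shows "(norm l + M + \<alpha>)-lipschitz_on UNIV (\<lambda>x. l x - M * norm x - \<alpha> * norm (x - z))"
proof (rule lipschitz_onI)
  fix x y :: 'a
  have "\<bar>l x - l y\<bar> \<le> norm l * norm (x - y)"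
    using norm_blinfun[of l "x - y"] by (simp add: blinfun.diff_right)
  moreover have "\<bar>M * (norm x - norm y)\<bar> \<le> M * norm (x - y)"
    using norm_triangle_ineq3[of x y] assms(1) by (simp add: abs_mult mult_left_mono)
  moreover have "\<bar>\<alpha> * (norm (x - z) - norm (y - z))\<bar> \<le> \<alpha> * norm (x - y)"
    using norm_triangle_ineq3[of "x - z" "y - z"] assms(2) by (simp add: abs_mult mult_left_mono)
  moreover have "\<bar>(l x - l y) - M * (norm x - norm y) - \<alpha> * (norm (x - z) - norm (y - z))\<bar>
      \<le> \<bar>l x - l y\<bar> + \<bar>M * (norm x - norm y)\<bar> + \<bar>\<alpha> * (norm (x - z) - norm (y - z))\<bar>"
    using abs_triangle_ineq4[of "l x - l y - M * (norm x - norm y)" "\<alpha> * (norm (x - z) - norm (y - z))"]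
      abs_triangle_ineq4[of "l x - l y" "M * (norm x - norm y)"] by linarith
  moreover have "(l x - M * norm x - \<alpha> * norm (x - z)) - (l y - M * norm y - \<alpha> * norm (y - z))
      = (l x - l y) - M * (norm x - norm y) - \<alpha> * (norm (x - z) - norm (y - z))"
    by (simp add: algebra_simps)
  ultimately show "dist (l x - M * norm x - \<alpha> * norm (x - z)) (l y - M * norm y - \<alpha> * norm (y - z))
      \<le> (norm l + M + \<alpha>) * dist x y"
    unfolding dist_real_def dist_norm distrib_right by linarith
  show "0 \<le> norm l + M + \<alpha>" using assms by simp
qed

lemma conj_ekeland_setting:
  fixes g :: "('a::banach \<Rightarrow>\<^sub>L real) \<Rightarrow> ereal" and xs :: "'a \<Rightarrow>\<^sub>L real"
  assumes P: "proper_fun g" and y0: "g y0 = ereal r0" and "M \<ge> 0" "\<alpha> > 0"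
  shows "ekeland_setting (\<lambda>x. conjugate g x - xs x + M * norm x)
    {x. norm x \<le> R \<and> conj_le g x (b + xs x - M * norm x)} \<alpha> (- norm y0 * R - r0 - norm xs * R)"
proof -
  define \<phi> where "\<phi> x = conjugate g x - xs x + M * norm x" for x
  define KS where "KS = {x. norm x \<le> R \<and> conj_le g x (b + xs x - M * norm x)}"
  have conj: "conjugate g x \<le> K" "conj_le g x (conjugate g x)" if "conj_le g x K" for x K
    using conj_le_conjugate[OF P that] by auto
  have cont: "continuous_on UNIV (\<lambda>x. c + xs x - M * norm x)" for c
    by (intro continuous_intros linear_continuous_on[OF blinfun.bounded_linear_right])
  have "closed KS"
  proof -
    have "KS = cball 0 R \<inter> {x. conj_le g x (b + xs x - M * norm x)}" unfolding KS_def by auto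
    then show ?thesis by (simp only:) (intro closed_Int closed_cball closed_conj_le cont)
  qed
  moreover have "closed {x\<in>KS. \<phi> x \<le> c}" for c
  proof -
    have "{x\<in>KS. \<phi> x \<le> c} = KS \<inter> {x. conj_le g x (c + xs x - M * norm x)}"
      using conj conj_le_mono unfolding KS_def \<phi>_def by (fastforce simp: algebra_simps)
    then show ?thesis by (simp only:) (intro closed_Int \<open>closed KS\<close> closed_conj_le cont)
  qed
  moreover have "- norm y0 * R - r0 - norm xs * R \<le> \<phi> x" if "x \<in> KS" for x
  proof -
    have "norm x \<le> R" "conj_le g x (conjugate g x)" using that conj unfolding KS_def by auto
    then have "norm y0 * norm x \<le> norm y0 * R" "norm xs * norm x \<le> norm xs * R"
      and "blinfun_apply y0 x - r0 \<le> conjugate g x"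
      using y0 unfolding conj_le_def by (auto simp: mult_left_mono)
    moreover have "- (norm y0 * norm x) \<le> blinfun_apply y0 x" "xs x \<le> norm xs * norm x"
      using norm_blinfun[of y0 x] norm_blinfun[of xs x] by simp_all
    moreover have "0 \<le> M * norm x" using \<open>M \<ge> 0\<close> by simp
    ultimately show ?thesis unfolding \<phi>_def by linarith
  qed
  ultimately show ?thesis
    using \<open>\<alpha> > 0\<close> unfolding \<phi>_def[abs_def] KS_def by unfold_locales auto
qed

text \<open>The slope M is
  small enough that x1 stays a better point than 0, which keeps the Ekeland point away
  from 0.\<close>

lemma conj_ekeland_point:
  fixes g :: "('a::banach \<Rightarrow>\<^sub>L real) \<Rightarrow> ereal" and xs :: "'a \<Rightarrow>\<^sub>L real"
  assumes P: "proper_fun g" and y0: "g y0 = ereal r0"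
    and x1: "conj_le g x1 K1" and gap: "r0 < blinfun_apply xs x1 - K1"
  obtains z R \<alpha> M where "z \<noteq> 0" "norm z \<le> R" "norm x1 < R" "0 < \<alpha>" "\<alpha> < M"
    "conj_le g z (conjugate g z)"
    "\<And>x r. conj_le g x r \<Longrightarrow> norm x < R \<Longrightarrow>
       conjugate g z - xs z + M * norm z \<le> r - xs x + M * norm x + \<alpha> * norm (x - z)"
proof -
  define F where "F = conjugate g"
  have F_le: "F x \<le> K" and F_conj_le: "conj_le g x (F x)" if "conj_le g x K" for x K
    using conj_le_conjugate[OF P that] unfolding F_def by auto
  define M where "M = (- r0 - (F x1 - xs x1)) / (norm x1 + 1)"
  have "F x1 - xs x1 < - r0" using F_le[OF x1] gap by simp
  then have "M > 0" unfolding M_def by (simp add: add_nonneg_pos)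
  define \<alpha> where "\<alpha> = M / 2"
  define R where "R = norm x1 + 1"
  define \<phi> where "\<phi> x = F x - xs x + M * norm x" for x
  have "M * (norm x1 + 1) = - r0 - (F x1 - xs x1)"
    unfolding M_def using add_nonneg_pos[OF norm_ge_zero[of x1] zero_less_one] by simp
  then have \<phi>_x1: "\<phi> x1 < - r0" unfolding \<phi>_def using \<open>M > 0\<close> by (simp add: algebra_simps)
  define KS where "KS = {x. norm x \<le> R \<and> conj_le g x (\<phi> x1 + xs x - M * norm x)}"
  interpret ekeland_setting \<phi> KS \<alpha> "- norm y0 * R - r0 - norm xs * R"
    using conj_ekeland_setting[OF P y0, where M = M and \<alpha> = \<alpha> and R = R and b = "\<phi> x1" and xs = xs]
      \<open>M > 0\<close>
    unfolding \<alpha>_def \<phi>_def[abs_def] KS_def F_def by simp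
  have "x1 \<in> KS" unfolding KS_def R_def \<phi>_def using F_conj_le[OF x1] by simp
  then obtain z where z: "z \<in> KS" "\<phi> z \<le> \<phi> x1" and z_min: "\<And>x. x \<in> KS \<Longrightarrow> \<phi> z \<le> \<phi> x + \<alpha> * dist x z"
    using ekeland_variational_principle by blast
  have "norm z \<le> R" "conj_le g z (F z)" using z(1) F_conj_le unfolding KS_def by auto
  have "z \<noteq> 0"
  proof
    assume "z = 0"
    moreover have "blinfun_apply y0 z - r0 \<le> F z"
      using \<open>conj_le g z (F z)\<close> y0 unfolding conj_le_def by simp
    ultimately have "- r0 \<le> \<phi> z" unfolding \<phi>_def by simp
    then show False using z(2) \<phi>_x1 by simp
  qed
  moreover have "\<phi> z \<le> r - xs x + M * norm x + \<alpha> * norm (x - z)"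
    if "conj_le g x r" "norm x < R" for x r
  proof (cases "conj_le g x (\<phi> x1 + xs x - M * norm x)")
    case True
    then have "x \<in> KS" using that(2) unfolding KS_def by simp
    then show ?thesis using z_min F_le[OF that(1)] unfolding \<phi>_def dist_norm by fastforce
  next
    case False
    then have "\<phi> x1 + xs x - M * norm x < r" using that(1) conj_le_mono not_le by metis
    moreover have "0 \<le> \<alpha> * norm (x - z)" using \<open>M > 0\<close> unfolding \<alpha>_def by simp
    ultimately show ?thesis using z(2) by linarith
  qed
  ultimately show thesis
    using that[of z R \<alpha> M] \<open>M > 0\<close> \<open>norm z \<le> R\<close> \<open>conj_le g z (F z)\<close>
    unfolding \<alpha>_def R_def \<phi>_def F_def by simp
qed

lemma exists_conj_subgradient:
  fixes g :: "('a::banach \<Rightarrow>\<^sub>L real) \<Rightarrow> ereal" and xs :: "'a \<Rightarrow>\<^sub>L real"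
  assumes "proper_fun g" "g y0 = ereal r0" "conj_le g x1 K1" "r0 < blinfun_apply xs x1 - K1"
  obtains z and w :: "'a \<Rightarrow>\<^sub>L real" where "conj_le g z (conjugate g z)" "\<And>x r. conj_le g x r \<Longrightarrow> w x - r \<le> w z - conjugate g z"
    and "w z < xs z"
proof -
  obtain z R \<alpha> M where "z \<noteq> 0" "norm z \<le> R" "norm x1 < R" "0 < \<alpha>" "\<alpha> < M"
    and z: "conj_le g z (conjugate g z)"
    and ekeland: "\<And>x r. conj_le g x r \<Longrightarrow> norm x < R \<Longrightarrow>
       conjugate g z - xs z + M * norm z \<le> r - xs x + M * norm x + \<alpha> * norm (x - z)"
    using conj_ekeland_point[OF assms] by blast
  define \<psi> where "\<psi> x = xs x - M * norm x - \<alpha> * norm (x - z)" for x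
  define C where "C = {v. conj_le g (fst v) (snd v)}"
  have concave: "concave_on UNIV \<psi>" and lip: "(norm xs + M + \<alpha>)-lipschitz_on UNIV \<psi>"
    unfolding \<psi>_def using \<open>0 < \<alpha>\<close> \<open>\<alpha> < M\<close>
    by (simp_all add: concave_on_linear_minus_norms lipschitz_on_linear_minus_norms)
  have above: "conjugate g z + \<psi> x - \<psi> z \<le> r" if "(x, r) \<in> C" "norm x < R" for x r
    using ekeland[of x r] that unfolding C_def \<psi>_def by simp
  have upward: "(x, r') \<in> C" if "(x, r) \<in> C" "r \<le> r'" for x r r'
    using that conj_le_mono unfolding C_def by auto
  have "convex C" "(z, conjugate g z) \<in> C" "(x1, K1) \<in> C"
    using convex_conj_le_epigraph z assms(3) unfolding C_def by simp_all
  then obtain w :: "'a \<Rightarrow>\<^sub>L real" where w_sub: "\<And>x r. (x, r) \<in> C \<Longrightarrow> w x - r \<le> w z - conjugate g z"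
    and w_sup: "\<And>x. norm x < R \<Longrightarrow> \<psi> x - \<psi> z \<le> w x - w z"
    using ball_sandwich_subgradient[of C z "conjugate g z" R x1 K1 \<psi>] upward above concave lip
      \<open>norm z \<le> R\<close> \<open>norm x1 < R\<close> by blast
  txt \<open>Evaluating the sandwich at 0: the term M \<parallel>\<cdot>\<parallel> pushes w z strictly below xs z.\<close>
  have "w z \<le> xs z - (M - \<alpha>) * norm z"
    using w_sup[of 0] \<open>norm x1 < R\<close> norm_ge_zero[of x1] unfolding \<psi>_def by (simp add: algebra_simps)
  also have "\<dots> < xs z" using \<open>z \<noteq> 0\<close> \<open>\<alpha> < M\<close> by simp
  finally have "w z < xs z" .
  moreover have "w x - r \<le> w z - conjugate g z" if "conj_le g x r" for x r
    using w_sub[of x r] that unfolding C_def by simp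
  ultimately show thesis using that z by blast
qed

lemma conj_subgradient_imp_subdiff_X:
  fixes g :: "('a::real_normed_vector \<Rightarrow>\<^sub>L real) \<Rightarrow> ereal" and w :: "'a \<Rightarrow>\<^sub>L real"
  assumes P: "proper_fun g" "convex_ereal g" "weak_star_lsc g"
    and z: "conj_le g z c" and w: "\<And>x r. conj_le g x r \<Longrightarrow> w x - r \<le> w z - c"
  shows "g w = ereal (w z - c)" "z \<in> subdiff_X g w"
proof -
  have "g w \<le> ereal (w z - c)"
  proof (rule ccontr)
    assume "\<not> g w \<le> ereal (w z - c)"
    then obtain x K where "conj_le g x K" "w z - c < w x - K"
      using exists_affine_minorant_above[OF P, of "w z - c" w] by (metis not_le)
    then show False using w by fastforce
  qed
  moreover have "g w \<noteq> - \<infinity>" using P(1) unfolding proper_fun_def by blast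
  ultimately obtain \<gamma> where \<gamma>: "g w = ereal \<gamma>" "\<gamma> \<le> w z - c" by (cases "g w") auto
  then have "w z - \<gamma> \<le> c" using z unfolding conj_le_def by simp
  with \<gamma> show "g w = ereal (w z - c)" by simp
  show "z \<in> subdiff_X g w"
    unfolding subdiff_X_def
  proof (intro CollectI allI)
    fix ys
    show "ereal (blinfun_apply (ys - w) z) \<le> g ys - g w"
    proof (cases "g ys")
      case (real r)
      then have "ys z - r \<le> c" using z unfolding conj_le_def by simp
      then have "ys z - w z \<le> r - \<gamma>" using \<gamma>(2) by linarith
      then show ?thesis using real \<gamma>(1) by simp
    qed (use \<gamma> P(1) in \<open>auto simp: proper_fun_def\<close>)
  qed
qed

theorem mainTheorem8:
  fixes g :: "('a::banach \<Rightarrow>\<^sub>L real) \<Rightarrow> ereal"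
    and xs :: "'a \<Rightarrow>\<^sub>L real"
  assumes "proper_fun g" and "convex_ereal g" and "weak_star_lsc g"
    and "(INF y. g y) < g xs"
  shows "\<exists>zs z. zs \<in> dom_fun g \<and> z \<in> subdiff_X g zs \<and> g zs < g xs
                \<and> blinfun_apply (xs - zs) z > 0"
proof -
  obtain y0 where "g y0 < g xs" using assms(4) by (auto simp: INF_less_iff)
  moreover have "g y0 \<noteq> - \<infinity>" using assms(1) unfolding proper_fun_def by blast
  ultimately obtain r0 where y0: "g y0 = ereal r0" and "ereal r0 < g xs" by (cases "g y0") auto
  then obtain x1 K1 where "conj_le g x1 K1" "r0 < xs x1 - K1"
    using exists_affine_minorant_above[OF assms(1-3)] by blast
  then obtain z and w :: "'a \<Rightarrow>\<^sub>L real" where z: "conj_le g z (conjugate g z)"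
    and w: "\<And>x r. conj_le g x r \<Longrightarrow> w x - r \<le> w z - conjugate g z" and "w z < xs z"
    using exists_conj_subgradient[OF assms(1) y0] by blast
  have gw: "g w = ereal (w z - conjugate g z)" and "z \<in> subdiff_X g w"
    using conj_subgradient_imp_subdiff_X[OF assms(1-3) z w] by blast+
  moreover have "g w < g xs"
  proof (cases "g xs")
    case (real r)
    then have "xs z - r \<le> conjugate g z" using z unfolding conj_le_def by simp
    then show ?thesis using real gw \<open>w z < xs z\<close> by simp
  qed (use gw assms(1) in \<open>auto simp: proper_fun_def\<close>)
  ultimately show ?thesis using \<open>w z < xs z\<close> unfolding dom_fun_def by force
qed

end
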